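(* Let $R$ be a commutative ring with unit and $M$ an $R$-module, and assume one of: (a) $R$ is an integral domain and $M$ is a torsion-free $R$-module; (b) $R$ is a Dedekind domain; (c) $R$ is a reduced ring with finitely many minimal prime ideals and $M=R$. Let $\mathbf A$ be a $k\times l$ matrix with entries in $R$ and let $\mathbf b\in M^k$ be nonzero. Then the equation $\mathbf A\mathbf m=\mathbf b$ is partition regular over $M$ if and only if it has a constant solution in $M$, i.e. there is $m\in M$ with $\mathbf A(m,\dots,m)^{\intercal}=\mathbf b$.
   Context: The equation $\mathbf{A}\mathbf{m}=\mathbf b$ is partition regular over $M$ if for every $r\ge1$ and every map $\chi\colon M\to\{1,\dots,r\}$ there exists $\mathbf m=(m_1,\dots,m_l)^{\intercal}\in M^l$, not all $m_i$ zero, with $\mathbf{A}\mathbf{m}=\mathbf b$ and $\chi(m_1)=\dots=\chi(m_l)$. *)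

theory Defs
  imports Main "HOL.Modules"
begin

definition is_ideal :: "'a::comm_ring_1 set \<Rightarrow> bool" where
  "is_ideal I \<longleftrightarrow> 0 \<in> I \<and> (\<forall>x\<in>I. \<forall>y\<in>I. x + y \<in> I) \<and> (\<forall>r. \<forall>x\<in>I. r * x \<in> I)"

definition prime_ideal :: "'a::comm_ring_1 set \<Rightarrow> bool" where
  "prime_ideal P \<longleftrightarrow> is_ideal P \<and> P \<noteq> UNIV \<and> (\<forall>a b. a * b \<in> P \<longrightarrow> a \<in> P \<or> b \<in> P)"

definition maximal_ideal :: "'a::comm_ring_1 set \<Rightarrow> bool" where
  "maximal_ideal P \<longleftrightarrow> is_ideal P \<and> P \<noteq> UNIV \<and>
     (\<forall>J. is_ideal J \<and> P \<subseteq> J \<longrightarrow> J = P \<or> J = UNIV)"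

definition minimal_prime_ideal :: "'a::comm_ring_1 set \<Rightarrow> bool" where
  "minimal_prime_ideal P \<longleftrightarrow> prime_ideal P \<and> (\<forall>Q. prime_ideal Q \<and> Q \<subseteq> P \<longrightarrow> Q = P)"

definition reduced_ring :: "'a::comm_ring_1 itself \<Rightarrow> bool" where
  "reduced_ring _ \<longleftrightarrow> (\<forall>(x::'a) (n::nat). x ^ n = 0 \<longrightarrow> x = 0)"

definition integral_domain :: "'a::comm_ring_1 itself \<Rightarrow> bool" where
  "integral_domain _ \<longleftrightarrow> (\<forall>a b :: 'a. a * b = 0 \<longrightarrow> a = 0 \<or> b = 0)"
  (* 0 \<noteq> 1 is built into comm_ring_1 *)

definition noetherian_ring :: "'a::comm_ring_1 itself \<Rightarrow> bool" where
  "noetherian_ring _ \<longleftrightarrow> (\<forall>I :: 'a set. is_ideal I \<longrightarrow>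
      (\<exists>F. finite F \<and> F \<subseteq> I \<and> I = {\<Sum>f\<in>F. c f * f | c. True}))"

text \<open>Integrally closed (in the field of fractions), with fractions a/b written out:
  a/b (b \<noteq> 0) is a root of the monic polynomial X^n + \<Sum>_{i<n} c_i X^i iff
  a^n + \<Sum>_{i<n} c_i a^i b^(n-i) = 0, and a/b lies in R iff b divides a.\<close>
definition integrally_closed :: "'a::comm_ring_1 itself \<Rightarrow> bool" where
  "integrally_closed _ \<longleftrightarrow> (\<forall>(a::'a) b n c. b \<noteq> 0 \<longrightarrow>
      a ^ n + (\<Sum>i<n. c i * a ^ i * b ^ (n - i)) = 0 \<longrightarrow> b dvd a)"

definition dedekind_domain :: "'a::comm_ring_1 itself \<Rightarrow> bool" where
  "dedekind_domain T \<longleftrightarrow> integral_domain T \<and> noetherian_ring T \<and> integrally_closed T \<and>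
     (\<forall>P :: 'a set. prime_ideal P \<and> P \<noteq> {0} \<longrightarrow> maximal_ideal P)"

definition torsion_free :: "('a::comm_ring_1 \<Rightarrow> 'b::ab_group_add \<Rightarrow> 'b) \<Rightarrow> bool" where
  "torsion_free scale \<longleftrightarrow> (\<forall>r m. r \<noteq> 0 \<longrightarrow> m \<noteq> 0 \<longrightarrow> scale r m \<noteq> 0)"

definition solves ::
  "('a::comm_ring_1 \<Rightarrow> 'b::ab_group_add \<Rightarrow> 'b) \<Rightarrow> (nat \<Rightarrow> nat \<Rightarrow> 'a) \<Rightarrow> nat \<Rightarrow> nat
     \<Rightarrow> (nat \<Rightarrow> 'b) \<Rightarrow> (nat \<Rightarrow> 'b) \<Rightarrow> bool" where
  "solves scale A k l b m \<longleftrightarrow> (\<forall>i<k. (\<Sum>j<l. scale (A i j) (m j)) = b i)"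

definition partition_regular ::
  "('a::comm_ring_1 \<Rightarrow> 'b::ab_group_add \<Rightarrow> 'b) \<Rightarrow> (nat \<Rightarrow> nat \<Rightarrow> 'a) \<Rightarrow> nat \<Rightarrow> nat
     \<Rightarrow> (nat \<Rightarrow> 'b) \<Rightarrow> bool" where
  "partition_regular scale A k l b \<longleftrightarrow>
     (\<forall>(r::nat) (\<chi>::'b \<Rightarrow> nat). r \<ge> 1 \<longrightarrow> range \<chi> \<subseteq> {1..r} \<longrightarrow>
        (\<exists>m. solves scale A k l b m \<and> (\<exists>j<l. m j \<noteq> 0) \<and>
             (\<forall>j<l. \<forall>j'<l. \<chi> (m j) = \<chi> (m j'))))"

end

theory Submission
  imports Defs Complex_Main
begin

text \<open>A constant solution \<open>m\<close> is nonzero because \<open>b\<close> is, so it is monochromatic for every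
  colouring. Conversely, a monochromatic solution of \<open>A m = b\<close> also solves each combination
  \<open>\<Sum>\<^sub>i u\<^sub>i (A m)\<^sub>i = \<Sum>\<^sub>i u\<^sub>i b\<^sub>i\<close>, a single equation \<open>\<Sum>\<^sub>j a\<^sub>j m\<^sub>j = c\<close>. By Straus' argument such an
  equation is not partition regular unless \<open>c \<in> \<sigma>M\<close> with \<open>\<sigma> = \<Sum>\<^sub>j a\<^sub>j\<close>: a character
  \<open>M \<rightarrow> \<real>/\<int>\<close> vanishing on \<open>\<sigma>M\<close> but not at \<open>c\<close> yields a finite colouring without monochromatic
  solutions. So, with the row sums \<open>s\<^sub>i = \<Sum>\<^sub>j A\<^sub>i\<^sub>j\<close>, every \<open>\<Sum>\<^sub>i u\<^sub>i b\<^sub>i\<close> lies in \<open>(\<Sum>\<^sub>i u\<^sub>i s\<^sub>i) M\<close>.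
  From this a common solution of \<open>s\<^sub>i m = b\<^sub>i\<close> is built: (a) by cancellation in a torsion-free
  module; (b) from the invertibility of the ideal \<open>(s\<^sub>1, \<dots>, s\<^sub>k)\<close> in a Dedekind domain; (c) by
  choosing \<open>u\<close> with \<open>\<Sum>\<^sub>i u\<^sub>i s\<^sub>i\<close> outside every minimal prime that does not contain all \<open>s\<^sub>i\<close>.\<close>

section \<open>Characters of abelian groups\<close>

definition additive_subgroup :: "'b::ab_group_add set \<Rightarrow> bool" where
  "additive_subgroup H \<longleftrightarrow> 0 \<in> H \<and> (\<forall>x\<in>H. \<forall>y\<in>H. x + y \<in> H) \<and> (\<forall>x\<in>H. - x \<in> H)"

lemma additive_subgroup_0: "additive_subgroup H \<Longrightarrow> 0 \<in> H"
  and additive_subgroup_add: "additive_subgroup H \<Longrightarrow> x \<in> H \<Longrightarrow> y \<in> H \<Longrightarrow> x + y \<in> H"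
  and additive_subgroup_uminus: "additive_subgroup H \<Longrightarrow> x \<in> H \<Longrightarrow> - x \<in> H"
  unfolding additive_subgroup_def by blast+

lemma additive_subgroup_diff: "additive_subgroup H \<Longrightarrow> x \<in> H \<Longrightarrow> y \<in> H \<Longrightarrow> x - y \<in> H"
  using additive_subgroup_add[of H x "- y"] additive_subgroup_uminus[of H y] by simp

text \<open>Characters are homomorphisms into \<open>\<real>/\<int>\<close>, represented by real-valued lifts. A partial
  character is given by its graph over a subgroup; a point may carry several values, all congruent
  modulo \<open>\<int>\<close>.\<close>

definition character :: "('b::ab_group_add \<Rightarrow> real) \<Rightarrow> bool" where
  "character \<phi> \<longleftrightarrow> (\<forall>x y. \<phi> (x + y) - \<phi> x - \<phi> y \<in> \<int>)"

definition partial_character :: "('b::ab_group_add \<times> real) set \<Rightarrow> bool" where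
  "partial_character G \<longleftrightarrow> additive_subgroup (fst ` G) \<and>
     (\<forall>x u y v w. (x, u) \<in> G \<longrightarrow> (y, v) \<in> G \<longrightarrow> (x + y, w) \<in> G \<longrightarrow> w - u - v \<in> \<int>)"

lemma partial_character_subgroup: "partial_character G \<Longrightarrow> additive_subgroup (fst ` G)"
  and partial_character_add:
    "partial_character G \<Longrightarrow> (x, u) \<in> G \<Longrightarrow> (y, v) \<in> G \<Longrightarrow> (x + y, w) \<in> G \<Longrightarrow> w - u - v \<in> \<int>"
  unfolding partial_character_def by blast+

lemma partial_character_zero:
  assumes "partial_character G" "(0, e) \<in> G"
  shows "e \<in> \<int>"
  using partial_character_add[OF assms(1) assms(2) assms(2), of e] assms(2) by simp

lemma partial_character_unique:
  assumes G: "partial_character G" and "(x, u) \<in> G" "(x, u') \<in> G"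
  shows "u' - u \<in> \<int>"
proof -
  obtain e where e: "(0, e) \<in> G"
    using additive_subgroup_0[OF partial_character_subgroup[OF G]] by force
  have "u' - u - e \<in> \<int>"
    using partial_character_add[OF G assms(2) e] assms(3) by simp
  from Ints_add[OF this partial_character_zero[OF G e]] show ?thesis
    by simp
qed

lemma partial_character_Union_chain:
  assumes ch: "subset.chain \<A> \<C>" and "\<C> \<noteq> {}" and G: "\<And>G. G \<in> \<C> \<Longrightarrow> partial_character G"
  shows "partial_character (\<Union>\<C>)"
proof -
  have common: "\<exists>B\<in>\<C>. F \<subseteq> B" if "finite F" "F \<subseteq> \<Union>\<C>" for F
    using finite_subset_Union_chain[OF that \<open>\<C> \<noteq> {}\<close> ch] by blast
  have subgroup: "additive_subgroup (fst ` \<Union>\<C>)"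
    unfolding additive_subgroup_def
  proof (intro conjI ballI)
    obtain B where "B \<in> \<C>" using \<open>\<C> \<noteq> {}\<close> by blast
    then show "0 \<in> fst ` \<Union>\<C>"
      using additive_subgroup_0[OF partial_character_subgroup[OF G]] by blast
  next
    fix x y assume "x \<in> fst ` \<Union>\<C>" "y \<in> fst ` \<Union>\<C>"
    then obtain u v where "(x, u) \<in> \<Union>\<C>" "(y, v) \<in> \<Union>\<C>" by force
    then obtain B where B: "B \<in> \<C>" "(x, u) \<in> B" "(y, v) \<in> B"
      using common[of "{(x, u), (y, v)}"] by auto
    then have "x \<in> fst ` B" "y \<in> fst ` B" by force+
    then have "x + y \<in> fst ` B" "- x \<in> fst ` B"
      using additive_subgroup_add additive_subgroup_uminus partial_character_subgroup[OF G[OF B(1)]]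
      by blast+
    then show "x + y \<in> fst ` \<Union>\<C>" "- x \<in> fst ` \<Union>\<C>" using B(1) by blast+
  qed
  have add: "w - u - v \<in> \<int>"
    if "(x, u) \<in> \<Union>\<C>" "(y, v) \<in> \<Union>\<C>" "(x + y, w) \<in> \<Union>\<C>" for x u y v w
  proof -
    have "{(x, u), (y, v), (x + y, w)} \<subseteq> \<Union>\<C>" using that by blast
    from common[OF _ this] obtain B where "B \<in> \<C>" "{(x, u), (y, v), (x + y, w)} \<subseteq> B"
      by (meson finite.emptyI finite.insertI)
    then show ?thesis using partial_character_add[OF G[of B], of x u y v w] by simp
  qed
  show ?thesis
    unfolding partial_character_def using subgroup add by simp
qed

lemma character_zero:
  assumes "character \<phi>"
  shows "\<phi> 0 \<in> \<int>"
proof -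
  have "\<phi> (0 + 0) - \<phi> 0 - \<phi> 0 \<in> \<int>"
    using assms unfolding character_def by blast
  from Ints_minus[OF this] show ?thesis by simp
qed

lemma character_sum:
  assumes "character \<phi>"
  shows "\<phi> (\<Sum>j\<in>J. g j) - (\<Sum>j\<in>J. \<phi> (g j)) \<in> \<int>"
proof (induction J rule: infinite_finite_induct)
  case (insert j J)
  have "\<phi> (g j + sum g J) - \<phi> (g j) - \<phi> (sum g J) \<in> \<int>"
    using assms unfolding character_def by blast
  from Ints_add[OF this insert.IH] show ?case
    using insert.hyps by (simp add: algebra_simps)
qed (use character_zero[OF assms] in simp_all)

definition admissible_value ::
    "('a::comm_ring_1 \<Rightarrow> 'b::ab_group_add \<Rightarrow> 'b) \<Rightarrow> ('b \<times> real) set \<Rightarrow> 'b \<Rightarrow> real \<Rightarrow> bool" where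
  "admissible_value scale G x t \<longleftrightarrow>
     (\<forall>n u. (scale (of_int n) x, u) \<in> G \<longrightarrow> of_int n * t - u \<in> \<int>)"

definition extend_character ::
    "('a::comm_ring_1 \<Rightarrow> 'b::ab_group_add \<Rightarrow> 'b) \<Rightarrow> ('b \<times> real) set \<Rightarrow> 'b \<Rightarrow> real \<Rightarrow> ('b \<times> real) set" where
  "extend_character scale G x t = {(h + scale (of_int n) x, u + of_int n * t) | h u n. (h, u) \<in> G}"

context module
begin

lemma additive_subgroup_scale_of_int:
  assumes H: "additive_subgroup H" and "x \<in> H"
  shows "scale (of_int n) x \<in> H"
proof -
  have nat: "scale (of_nat m) x \<in> H" for m
    by (induction m)
      (simp_all add: scale_left_distrib additive_subgroup_0[OF H] additive_subgroup_add[OF H] assms(2))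
  show ?thesis
  proof (cases "n \<ge> 0")
    case True
    then show ?thesis using nat[of "nat n"] by simp
  next
    case False
    then show ?thesis using additive_subgroup_uminus[OF H nat[of "nat (- n)"]] by simp
  qed
qed

lemma additive_subgroup_range_scale: "additive_subgroup (range (scale a))"
  unfolding additive_subgroup_def
proof (intro conjI ballI)
  show "0 \<in> range (scale a)" using scale_zero_right by (metis rangeI)
next
  fix x y assume "x \<in> range (scale a)" "y \<in> range (scale a)"
  then obtain x' y' where "x = scale a x'" "y = scale a y'" by blast
  then have "x + y = scale a (x' + y')" "- x = scale a (- x')"
    by (simp_all add: scale_right_distrib)
  then show "x + y \<in> range (scale a)" "- x \<in> range (scale a)" by (metis rangeI)+
qed

lemma int_multiples_in_subgroup:
  assumes H: "additive_subgroup H"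
  obtains n0 :: int where "n0 \<ge> 0" "\<And>n. scale (of_int n) x \<in> H \<longleftrightarrow> n0 dvd n"
proof (cases "\<exists>n>0. scale (of_int n) x \<in> H")
  case True
  let ?P = "\<lambda>m::nat. m > 0 \<and> scale (of_nat m) x \<in> H"
  define n0 where "n0 = int (LEAST m. ?P m)"
  from True obtain n where "n > 0" "scale (of_int n) x \<in> H" by blast
  then have "?P (nat n)" by simp
  then have "?P (LEAST m. ?P m)" by (rule LeastI)
  then have n0: "n0 > 0" "scale (of_int n0) x \<in> H"
    unfolding n0_def by simp_all
  have least: "n0 \<le> m" if "m > 0" "scale (of_int m) x \<in> H" for m
    using Least_le[of ?P "nat m"] that unfolding n0_def by simp
  have "scale (of_int n) x \<in> H \<longleftrightarrow> n0 dvd n" for n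
  proof
    assume n: "scale (of_int n) x \<in> H"
    have "scale (of_int (n mod n0)) x
        = scale (of_int n) x - scale (of_int (n div n0)) (scale (of_int n0) x)"
      by (simp add: scale_left_diff_distrib[symmetric] minus_div_mult_eq_mod[symmetric]
          mult.commute)
    also have "\<dots> \<in> H"
      using additive_subgroup_diff[OF H n additive_subgroup_scale_of_int[OF H n0(2)]] .
    finally have "scale (of_int (n mod n0)) x \<in> H" .
    moreover have "0 \<le> n mod n0" "n mod n0 < n0" using n0(1) by simp_all
    ultimately have "n mod n0 = 0" using least[of "n mod n0"] by linarith
    then show "n0 dvd n" by (simp add: dvd_eq_mod_eq_0)
  next
    assume "n0 dvd n"
    then obtain q where "n = n0 * q" by (rule dvdE)
    then show "scale (of_int n) x \<in> H"
      using additive_subgroup_scale_of_int[OF H n0(2), of q] by (simp add: mult.commute)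
  qed
  with that[of n0] n0(1) show thesis by simp
next
  case False
  have "scale (of_int n) x \<in> H \<longleftrightarrow> n = 0" for n
  proof
    assume n: "scale (of_int n) x \<in> H"
    have "scale (of_int (- n)) x \<in> H" using additive_subgroup_uminus[OF H n] by simp
    with n False show "n = 0" by (metis neg_0_less_iff_less not_less_iff_gr_or_eq)
  qed (simp add: additive_subgroup_0[OF H])
  then show thesis using that[of 0] by simp
qed

lemma partial_character_scale_of_int:
  assumes G: "partial_character G" and y: "(y, v) \<in> G" and "(scale (of_int q) y, w) \<in> G"
  shows "w - of_int q * v \<in> \<int>"
proof -
  have subgroup: "additive_subgroup (fst ` G)"
    using partial_character_subgroup[OF G] .
  have "y \<in> fst ` G" using y by force
  then have dom: "scale (of_int n) y \<in> fst ` G" for n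
    using additive_subgroup_scale_of_int[OF subgroup] by blast
  have nat: "w - of_nat m * v \<in> \<int>" if "(scale (of_nat m) y, w) \<in> G" for m w
    using that
  proof (induction m arbitrary: w)
    case 0
    then show ?case using partial_character_zero[OF G] by simp
  next
    case (Suc m)
    obtain w' where w': "(scale (of_nat m) y, w') \<in> G" using dom[of "int m"] by force
    have "w - w' - v \<in> \<int>"
      using partial_character_add[OF G w' y] Suc.prems by (simp add: scale_left_distrib add.commute)
    from Ints_add[OF this Suc.IH[OF w']] show ?case by (simp add: algebra_simps)
  qed
  show ?thesis
  proof (cases "q \<ge> 0")
    case True
    then show ?thesis using nat[of "nat q"] assms(3) by simp
  next
    case False
    obtain w' where w': "(scale (of_int (- q)) y, w') \<in> G" using dom[of "- q"] by force
    obtain e where e: "(0, e) \<in> G" using additive_subgroup_0[OF subgroup] by force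
    have "e - w - w' \<in> \<int>"
      using partial_character_add[OF G assms(3) w'] e False
      by (simp add: scale_left_distrib[symmetric])
    from Ints_diff[OF partial_character_zero[OF G e] this] have "w + w' \<in> \<int>" by simp
    moreover have "w' - of_int (- q) * v \<in> \<int>" using nat[of "nat (- q)" w'] w' False by simp
    ultimately have "(w + w') - (w' - of_int (- q) * v) \<in> \<int>" by (rule Ints_diff)
    then show ?thesis using False by (simp add: algebra_simps)
  qed
qed

lemma extend_characterI:
  "(h, u) \<in> G \<Longrightarrow> (h + scale (of_int n) x, u + of_int n * t) \<in> extend_character scale G x t"
  unfolding extend_character_def by blast

lemma subset_extend_character: "G \<subseteq> extend_character scale G x t"
  using extend_characterI[of _ _ G 0 x t] by auto

lemma partial_character_extend_character:
  assumes G: "partial_character G" and t: "admissible_value scale G x t"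
  shows "partial_character (extend_character scale G x t)"
proof -
  let ?E = "extend_character scale G x t"
  have subgroup: "additive_subgroup (fst ` G)" by (rule partial_character_subgroup[OF G])
  have dom: "fst ` ?E = {h + scale (of_int n) x | h n. h \<in> fst ` G}"
    unfolding extend_character_def by force
  have "additive_subgroup (fst ` ?E)"
    unfolding additive_subgroup_def dom
  proof (intro conjI ballI)
    show "0 \<in> {h + scale (of_int n) x | h n. h \<in> fst ` G}"
      using additive_subgroup_0[OF subgroup] by (intro CollectI exI[of _ 0]) simp
  next
    fix a b
    assume "a \<in> {h + scale (of_int n) x | h n. h \<in> fst ` G}"
      and "b \<in> {h + scale (of_int n) x | h n. h \<in> fst ` G}"
    then obtain h1 n1 h2 n2 where "a = h1 + scale (of_int n1) x" "h1 \<in> fst ` G"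
      and "b = h2 + scale (of_int n2) x" "h2 \<in> fst ` G" by blast
    moreover have "a + b = (h1 + h2) + scale (of_int (n1 + n2)) x"
      and "- a = - h1 + scale (of_int (- n1)) x"
      using calculation by (simp_all add: scale_left_distrib)
    ultimately show "a + b \<in> {h + scale (of_int n) x | h n. h \<in> fst ` G}"
      "- a \<in> {h + scale (of_int n) x | h n. h \<in> fst ` G}"
      using additive_subgroup_add[OF subgroup] additive_subgroup_uminus[OF subgroup] by blast+
  qed
  moreover have "w - u - v \<in> \<int>" if E: "(a, u) \<in> ?E" "(b, v) \<in> ?E" "(a + b, w) \<in> ?E" for a u b v w
  proof -
    obtain h1 u1 n1 where 1: "a = h1 + scale (of_int n1) x" "u = u1 + of_int n1 * t" "(h1, u1) \<in> G"
      using E(1) unfolding extend_character_def by blast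
    obtain h2 u2 n2 where 2: "b = h2 + scale (of_int n2) x" "v = u2 + of_int n2 * t" "(h2, u2) \<in> G"
      using E(2) unfolding extend_character_def by blast
    obtain h3 u3 n3
      where 3: "a + b = h3 + scale (of_int n3) x" "w = u3 + of_int n3 * t" "(h3, u3) \<in> G"
      using E(3) unfolding extend_character_def by blast
    obtain v' where v': "(h3 - h1, v') \<in> G"
      using additive_subgroup_diff[OF subgroup] 1(3) 3(3) by force
    obtain v0 where v0: "(h3 - h1 - h2, v0) \<in> G"
      using additive_subgroup_diff[OF subgroup] v' 2(3) by force
    have i1: "u3 - u1 - v' \<in> \<int>" using partial_character_add[OF G 1(3) v'] 3(3) by simp
    have i2: "v' - u2 - v0 \<in> \<int>" using partial_character_add[OF G 2(3) v0] v' by simp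
    have "h3 - h1 - h2 = scale (of_int (n1 + n2 - n3)) x"
      using 1(1) 2(1) 3(1) by (simp add: algebra_simps)
    then have i3: "of_int (n1 + n2 - n3) * t - v0 \<in> \<int>"
      using t v0 unfolding admissible_value_def by metis
    have "w - u - v = (u3 - u1 - v') + (v' - u2 - v0) - (of_int (n1 + n2 - n3) * t - v0)"
      using 1(2) 2(2) 3(2) by (simp add: algebra_simps)
    with Ints_diff[OF Ints_add[OF i1 i2] i3] show ?thesis by simp
  qed
  ultimately show ?thesis unfolding partial_character_def by blast
qed

lemma admissible_value_exists:
  assumes G: "partial_character G"
  shows "\<exists>t. admissible_value scale G x t"
proof -
  obtain n0 where n0: "n0 \<ge> 0" "\<And>n. scale (of_int n) x \<in> fst ` G \<longleftrightarrow> n0 dvd n"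
    using int_multiples_in_subgroup[OF partial_character_subgroup[OF G]] by blast
  show ?thesis
  proof (cases "n0 = 0")
    case True
    have "of_int n * 0 - u \<in> \<int>" if "(scale (of_int n) x, u) \<in> G" for n u
    proof -
      have "n = 0" using n0(2)[of n] that True by force
      then show ?thesis using partial_character_zero[OF G] that by simp
    qed
    then show ?thesis unfolding admissible_value_def by blast
  next
    case False
    obtain v0 where v0: "(scale (of_int n0) x, v0) \<in> G" using n0(2)[of n0] by force
    have "of_int n * (v0 / of_int n0) - u \<in> \<int>" if u: "(scale (of_int n) x, u) \<in> G" for n u
    proof -
      have "n0 dvd n" using n0(2)[of n] u by force
      then obtain q where q: "n = n0 * q" by (rule dvdE)
      then have "(scale (of_int q) (scale (of_int n0) x), u) \<in> G"
        using u by (simp add: mult.commute)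
      from Ints_minus[OF partial_character_scale_of_int[OF G v0 this]]
      show ?thesis using q False by simp
    qed
    then show ?thesis unfolding admissible_value_def by blast
  qed
qed

text \<open>Outside the domain of \<open>G\<close>, the admissible values are not unique modulo \<open>\<int>\<close>: if
  \<open>n\<^sub>0 x\<close> generates the multiples of \<open>x\<close> in the domain, then \<open>n\<^sub>0 \<noteq> 1\<close>, and \<open>t\<close> may be
  shifted by \<open>1/n\<^sub>0\<close> (by \<open>1/2\<close> if \<open>n\<^sub>0 = 0\<close>).\<close>

lemma admissible_value_shift:
  assumes G: "partial_character G" and x: "x \<notin> fst ` G" and t: "admissible_value scale G x t"
  shows "\<exists>t'. admissible_value scale G x t' \<and> t' - t \<notin> \<int>"
proof -
  obtain n0 where n0: "n0 \<ge> 0" "\<And>n. scale (of_int n) x \<in> fst ` G \<longleftrightarrow> n0 dvd n"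
    using int_multiples_in_subgroup[OF partial_character_subgroup[OF G]] by blast
  have "n0 \<noteq> 1" using n0(2)[of 1] x by auto
  define d :: real where "d = (if n0 = 0 then 1 / 2 else 1 / of_int n0)"
  have "0 < d" "d < 1" unfolding d_def using n0(1) \<open>n0 \<noteq> 1\<close> by auto
  then have d: "d \<notin> \<int>" using frac_gt_0_iff[of d] by simp
  have "of_int n * (t + d) - u \<in> \<int>" if u: "(scale (of_int n) x, u) \<in> G" for n u
  proof -
    have "n0 dvd n" using n0(2)[of n] u by force
    then have "of_int n * d \<in> \<int>" unfolding d_def by auto
    moreover have "of_int n * t - u \<in> \<int>" using t u unfolding admissible_value_def by blast
    from Ints_add[OF this calculation] show ?thesis by (simp add: algebra_simps)
  qed
  then have "admissible_value scale G x (t + d)" unfolding admissible_value_def by blast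
  then show ?thesis using d by (intro exI[of _ "t + d"]) simp
qed

text \<open>Zorn's lemma; a maximal partial character is total because \<open>\<real>/\<int>\<close> is divisible.\<close>

lemma exists_character_extending:
  fixes G :: "('b \<times> real) set"
  assumes G: "partial_character G"
  shows "\<exists>\<phi>. character \<phi> \<and> (\<forall>x u. (x, u) \<in> G \<longrightarrow> \<phi> x - u \<in> \<int>)"
proof -
  define \<A> where "\<A> = {G'. partial_character G' \<and> G \<subseteq> G'}"
  have "\<exists>M\<in>\<A>. \<forall>X\<in>\<A>. M \<subseteq> X \<longrightarrow> X = M"
  proof (rule subset_Zorn_nonempty)
    show "\<A> \<noteq> {}" using G unfolding \<A>_def by blast
  next
    fix \<C> assume "\<C> \<noteq> {}" and ch: "subset.chain \<A> \<C>"
    have "partial_character (\<Union>\<C>)"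
      using ch \<open>\<C> \<noteq> {}\<close> by (rule partial_character_Union_chain)
        (use ch in \<open>auto simp: \<A>_def subset_chain_def\<close>)
    moreover have "G \<subseteq> \<Union>\<C>" using \<open>\<C> \<noteq> {}\<close> ch unfolding \<A>_def subset_chain_def by blast
    ultimately show "\<Union>\<C> \<in> \<A>" unfolding \<A>_def by blast
  qed
  then obtain M where "M \<in> \<A>" and max_\<A>: "\<forall>X\<in>\<A>. M \<subseteq> X \<longrightarrow> X = M" by blast
  then have M: "partial_character M" "G \<subseteq> M" unfolding \<A>_def by simp_all
  have max: "X = M" if "partial_character X" "M \<subseteq> X" for X
    using max_\<A> that M(2) unfolding \<A>_def by blast
  have total: "x \<in> fst ` M" for x
  proof -
    obtain t where t: "admissible_value scale M x t" using admissible_value_exists[OF M(1)] by blast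
    have "extend_character scale M x t = M"
      using max[OF partial_character_extend_character[OF M(1) t] subset_extend_character] .
    moreover obtain e where "(0, e) \<in> M"
      using additive_subgroup_0[OF partial_character_subgroup[OF M(1)]] by force
    ultimately have "(x, e + t) \<in> M" using extend_characterI[of 0 e M 1 x t] by simp
    then show ?thesis by force
  qed
  define \<phi> where "\<phi> x = (SOME u. (x, u) \<in> M)" for x
  have \<phi>: "(x, \<phi> x) \<in> M" for x
  proof -
    have "\<exists>u. (x, u) \<in> M" using total[of x] by force
    then show ?thesis unfolding \<phi>_def by (rule someI_ex)
  qed
  have "character \<phi>"
    unfolding character_def using partial_character_add[OF M(1) \<phi> \<phi> \<phi>] by blast
  moreover have "\<phi> x - u \<in> \<int>" if "(x, u) \<in> G" for x u
    using partial_character_unique[OF M(1) _ \<phi>] that M(2) by blast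
  ultimately show ?thesis by (intro exI[of _ \<phi>]) simp
qed

text \<open>Extend the partial character \<open>H \<times> \<int>\<close>, zero on \<open>H\<close>, by a non-integral value at \<open>c\<close>.\<close>

lemma exists_character_separating:
  fixes H :: "'b set"
  assumes H: "additive_subgroup H" and c: "c \<notin> H"
  shows "\<exists>\<phi>. character \<phi> \<and> (\<forall>h\<in>H. \<phi> h \<in> \<int>) \<and> \<phi> c \<notin> \<int>"
proof -
  have dom: "fst ` (H \<times> \<int>) = H" by force
  have G0: "partial_character (H \<times> \<int>)"
    unfolding partial_character_def dom using H by (auto intro!: Ints_diff)
  obtain t where t: "admissible_value scale (H \<times> \<int>) c t"
    using admissible_value_exists[OF G0] by blast
  obtain t' where t': "admissible_value scale (H \<times> \<int>) c t'" "t' - t \<notin> \<int>"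
    using admissible_value_shift[OF G0 _ t] c dom by auto
  obtain t1 where t1: "admissible_value scale (H \<times> \<int>) c t1" "t1 \<notin> \<int>"
  proof (cases "t \<in> \<int>")
    case True
    then have "t' \<notin> \<int>" using t'(2) Ints_diff by blast
    then show thesis using that t'(1) by blast
  qed (use t that in blast)
  define G1 where "G1 = extend_character scale (H \<times> \<int>) c t1"
  have "(0 + scale (of_int 1) c, 0 + of_int 1 * t1) \<in> G1"
    unfolding G1_def using additive_subgroup_0[OF H] by (intro extend_characterI) simp
  then have c1: "(c, t1) \<in> G1" by simp
  have "partial_character G1"
    unfolding G1_def by (rule partial_character_extend_character[OF G0 t1(1)])
  then obtain \<phi> where \<phi>: "character \<phi>" "\<And>x u. (x, u) \<in> G1 \<Longrightarrow> \<phi> x - u \<in> \<int>"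
    using exists_character_extending by metis
  have "\<phi> h \<in> \<int>" if "h \<in> H" for h
  proof -
    have "(h, 0) \<in> H \<times> \<int>" using that by simp
    then have "(h, 0) \<in> G1" using subset_extend_character[of "H \<times> \<int>" c t1] unfolding G1_def by blast
    from \<phi>(2)[OF this] show ?thesis by simp
  qed
  moreover have "\<phi> c \<notin> \<int>"
  proof
    assume "\<phi> c \<in> \<int>"
    moreover have "\<phi> c - t1 \<in> \<int>" using \<phi>(2)[OF c1] .
    ultimately have "\<phi> c - (\<phi> c - t1) \<in> \<int>" by (rule Ints_diff)
    then show False using t1(2) by simp
  qed
  ultimately show ?thesis using \<phi>(1) by blast
qed

end

section \<open>Straus' colouring and the row-sum condition\<close>

lemma abs_diff_less_of_floor_mult_eq:
  fixes x y N :: real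
  assumes "N > 0" "\<lfloor>N * x\<rfloor> = \<lfloor>N * y\<rfloor>"
  shows "\<bar>x - y\<bar> < 1 / N"
proof -
  have "\<bar>N * x - N * y\<bar> < 1"
    using assms(2) of_int_floor_le[of "N * x"] of_int_floor_le[of "N * y"]
      real_of_int_floor_add_one_gt[of "N * x"] real_of_int_floor_add_one_gt[of "N * y"] by linarith
  then have "N * \<bar>x - y\<bar> < 1"
    using assms(1) by (simp add: abs_mult right_diff_distrib[symmetric])
  then show ?thesis using assms(1) by (simp add: field_simps)
qed

lemma frac_le_abs_of_diff_Ints:
  fixes x e :: real
  assumes "x - e \<in> \<int>" "\<bar>e\<bar> < 1 - frac x"
  shows "frac x \<le> \<bar>e\<bar>"
proof (rule ccontr)
  assume "\<not> frac x \<le> \<bar>e\<bar>"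
  then have "frac x - e \<in> {0<..<1}" using assms(2) by auto
  moreover have "frac x - e \<in> \<int>"
    using Ints_diff[OF assms(1) Ints_of_int[of "\<lfloor>x\<rfloor>"]] by (simp add: frac_def algebra_simps)
  ultimately show False using frac_gt_0_iff[of "frac x - e"] by simp
qed

lemma sum_diff_sum_frac_Ints: "(\<Sum>j\<in>J. f j) - (\<Sum>j\<in>J. frac (f j :: real)) \<in> \<int>"
proof -
  have "(\<Sum>j\<in>J. f j) - (\<Sum>j\<in>J. frac (f j)) = (\<Sum>j\<in>J. of_int \<lfloor>f j\<rfloor>)"
    by (simp add: frac_def sum_subtractf[symmetric])
  then show ?thesis by (simp add: Ints_sum)
qed

lemma finite_range_colouring:
  assumes "finite (range f)"
  shows "\<exists>(r::nat) (\<chi>::'a \<Rightarrow> nat). r \<ge> 1 \<and> range \<chi> \<subseteq> {1..r} \<and> (\<forall>x y. \<chi> x = \<chi> y \<longrightarrow> f x = f y)"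
proof -
  let ?r = "card (range f)"
  obtain g where g: "bij_betw g {1..?r} (range f)"
    using ex_bij_betw_nat_finite_1[OF assms] by blast
  define \<chi> where "\<chi> x = inv_into {1..?r} g (f x)" for x
  have "?r \<ge> 1" using assms by (simp add: Suc_le_eq card_gt_0_iff)
  moreover have "range \<chi> \<subseteq> {1..?r}"
    unfolding \<chi>_def using bij_betw_inv_into[OF g] by (auto simp: bij_betw_def)
  moreover have "f x = f y" if "\<chi> x = \<chi> y" for x y
    using that bij_betw_inv_into_right[OF g, of "f x"] bij_betw_inv_into_right[OF g, of "f y"]
    unfolding \<chi>_def by simp
  ultimately show ?thesis by blast
qed

text \<open>For the row sums \<open>s\<^sub>i = \<Sum>\<^sub>j A\<^sub>i\<^sub>j\<close>: every combination \<open>\<Sum>\<^sub>i u\<^sub>i (A m)\<^sub>i = \<Sum>\<^sub>i u\<^sub>i b\<^sub>i\<close> of the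
  equations has a constant solution.\<close>

definition row_sum_condition ::
    "('a::comm_ring_1 \<Rightarrow> 'b::ab_group_add \<Rightarrow> 'b) \<Rightarrow> (nat \<Rightarrow> 'a) \<Rightarrow> (nat \<Rightarrow> 'b) \<Rightarrow> nat \<Rightarrow> bool" where
  "row_sum_condition scale s b k \<longleftrightarrow>
     (\<forall>u. (\<Sum>i<k. scale (u i) (b i)) \<in> range (scale (\<Sum>i<k. u i * s i)))"

context module
begin

lemma character_solution_near_integral:
  assumes \<phi>: "character \<phi>" and \<sigma>: "\<And>y. \<phi> (scale (\<Sum>j<l. a j) y) \<in> \<int>"
    and sol: "(\<Sum>j<l. scale (a j) (m j)) = c"
  shows "\<phi> c - (\<Sum>j<l. frac (\<phi> (scale (a j) (m j))) - frac (\<phi> (scale (a j) y))) \<in> \<int>"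
proof -
  let ?p = "\<lambda>j. \<phi> (scale (a j) (m j))" and ?q = "\<lambda>j. \<phi> (scale (a j) y)"
  have i1: "\<phi> c - (\<Sum>j<l. ?p j) \<in> \<int>"
    using character_sum[OF \<phi>, of "\<lambda>j. scale (a j) (m j)" "{..<l}"] sol by simp
  have i2: "\<phi> (scale (\<Sum>j<l. a j) y) - (\<Sum>j<l. ?q j) \<in> \<int>"
    using character_sum[OF \<phi>, of "\<lambda>j. scale (a j) y" "{..<l}"] by (simp add: scale_sum_left)
  have i3: "(\<Sum>j<l. ?p j) - (\<Sum>j<l. frac (?p j)) \<in> \<int>"
    and i4: "(\<Sum>j<l. ?q j) - (\<Sum>j<l. frac (?q j)) \<in> \<int>"
    by (rule sum_diff_sum_frac_Ints)+
  have "\<phi> c - (\<Sum>j<l. frac (?p j) - frac (?q j))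
    = (\<phi> c - (\<Sum>j<l. ?p j)) + ((\<Sum>j<l. ?p j) - (\<Sum>j<l. frac (?p j)))
      - ((\<Sum>j<l. ?q j) - (\<Sum>j<l. frac (?q j))) - (\<phi> (scale (\<Sum>j<l. a j) y) - (\<Sum>j<l. ?q j))
      + \<phi> (scale (\<Sum>j<l. a j) y)"
    by (simp add: sum_subtractf)
  also have "\<dots> \<in> \<int>"
    using Ints_add[OF Ints_diff[OF Ints_diff[OF Ints_add[OF i1 i3] i4] i2] \<sigma>] .
  finally show ?thesis .
qed

text \<open>Straus: colour \<open>x\<close> by the first digits of the fractional parts of \<open>\<phi>(a\<^sub>j x)\<close>, where the
  character \<open>\<phi>\<close> is integral on \<open>\<sigma>M\<close> but not at \<open>c\<close>. For a monochromatic solution,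
  \<open>\<phi> c \<equiv> \<Sum>\<^sub>j \<phi>(a\<^sub>j x\<^sub>j)\<close> is then close to \<open>\<Sum>\<^sub>j \<phi>(a\<^sub>j x\<^sub>0) \<equiv> \<phi>(\<sigma> x\<^sub>0) \<equiv> 0\<close> modulo \<open>\<int>\<close>.\<close>

lemma not_partition_regular_single_equation:
  assumes c: "c \<notin> range (scale (\<Sum>j<l. a j))"
  shows "\<not> partition_regular scale (\<lambda>_. a) 1 l (\<lambda>_. c)"
proof -
  obtain \<phi> where \<phi>: "character \<phi>" "\<And>y. \<phi> (scale (\<Sum>j<l. a j) y) \<in> \<int>" "\<phi> c \<notin> \<int>"
    using exists_character_separating[OF additive_subgroup_range_scale c] by blast
  define \<delta> where "\<delta> = min (frac (\<phi> c)) (1 - frac (\<phi> c))"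
  have "\<delta> > 0" using \<phi>(3) frac_lt_1[of "\<phi> c"] unfolding \<delta>_def by simp
  obtain N :: nat where N: "real l / \<delta> < N" using reals_Archimedean2 by blast
  then have "N > 0"
    using \<open>\<delta> > 0\<close> by (metis divide_nonneg_pos of_nat_0_less_iff of_nat_0_le_iff order_le_less_trans)
  have l_N: "real l / N < \<delta>" using N \<open>\<delta> > 0\<close> \<open>N > 0\<close> by (simp add: field_simps)
  define col where "col x = map (\<lambda>j. \<lfloor>N * frac (\<phi> (scale (a j) x))\<rfloor>) [0..<l]" for x
  have "range col \<subseteq> {xs. set xs \<subseteq> {0..<int N} \<and> length xs = l}"
    unfolding col_def using \<open>N > 0\<close> frac_lt_1 by (auto simp: floor_less_iff)
  then have "finite (range col)" by (rule finite_subset) (simp add: finite_lists_length_eq)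
  from finite_range_colouring[OF this] obtain r :: nat and \<chi> :: "'b \<Rightarrow> nat"
    where \<chi>: "r \<ge> 1" "range \<chi> \<subseteq> {1..r}" "\<And>x y. \<chi> x = \<chi> y \<Longrightarrow> col x = col y"
    by blast
  have False
    if sol: "(\<Sum>j<l. scale (a j) (m j)) = c" and mono: "\<forall>j<l. \<forall>j'<l. \<chi> (m j) = \<chi> (m j')" for m
  proof -
    define d where "d j = frac (\<phi> (scale (a j) (m j))) - frac (\<phi> (scale (a j) (m 0)))" for j
    have "\<bar>d j\<bar> \<le> 1 / N" if "j < l" for j
    proof -
      have "0 < l" using that by simp
      then have "\<chi> (m j) = \<chi> (m 0)" using mono that by blast
      then have "col (m j) = col (m 0)" by (rule \<chi>(3))
      then have "\<lfloor>N * frac (\<phi> (scale (a j) (m j)))\<rfloor> = \<lfloor>N * frac (\<phi> (scale (a j) (m 0)))\<rfloor>"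
        using that unfolding col_def map_eq_conv by simp
      from abs_diff_less_of_floor_mult_eq[OF _ this] show ?thesis
        unfolding d_def using \<open>N > 0\<close> by simp
    qed
    then have "(\<Sum>j<l. \<bar>d j\<bar>) \<le> real l * (1 / N)"
      using sum_bounded_above[of "{..<l}" "\<lambda>j. \<bar>d j\<bar>" "1 / N"] by simp
    then have "\<bar>\<Sum>j<l. d j\<bar> \<le> real l / N"
      using order_trans[OF sum_abs[of d "{..<l}"]] by simp
    moreover have "\<phi> c - (\<Sum>j<l. d j) \<in> \<int>"
      unfolding d_def by (rule character_solution_near_integral[OF \<phi>(1,2) sol])
    ultimately show False
      using frac_le_abs_of_diff_Ints[of "\<phi> c" "\<Sum>j<l. d j"] l_N unfolding \<delta>_def by linarith
  qed
  moreover have "solves scale (\<lambda>_. a) 1 l (\<lambda>_. c) m \<longleftrightarrow> (\<Sum>j<l. scale (a j) (m j)) = c" for m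
    unfolding solves_def by simp
  ultimately have "\<not> (\<exists>m. solves scale (\<lambda>_. a) 1 l (\<lambda>_. c) m \<and> (\<forall>j<l. \<forall>j'<l. \<chi> (m j) = \<chi> (m j')))"
    by blast
  then show ?thesis
    unfolding partition_regular_def using \<chi>(1,2) by blast
qed

lemma partition_regular_row_combination:
  assumes "partition_regular scale A k l b"
  shows "partition_regular scale (\<lambda>_ j. \<Sum>i<k. u i * A i j) 1 l (\<lambda>_. \<Sum>i<k. scale (u i) (b i))"
proof -
  have "solves scale (\<lambda>_ j. \<Sum>i<k. u i * A i j) 1 l (\<lambda>_. \<Sum>i<k. scale (u i) (b i)) m"
    if "solves scale A k l b m" for m
  proof -
    have "(\<Sum>j<l. scale (\<Sum>i<k. u i * A i j) (m j)) = (\<Sum>i<k. scale (u i) (\<Sum>j<l. scale (A i j) (m j)))"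
      by (simp add: scale_sum_left scale_sum_right sum.swap[of _ "{..<l}"])
    also have "\<dots> = (\<Sum>i<k. scale (u i) (b i))"
      using that unfolding solves_def by simp
    finally show ?thesis unfolding solves_def by simp
  qed
  then show ?thesis
    using assms unfolding partition_regular_def by (meson order_refl)
qed

lemma partition_regular_imp_row_sum_condition:
  assumes "partition_regular scale A k l b"
  shows "row_sum_condition scale (\<lambda>i. \<Sum>j<l. A i j) b k"
  unfolding row_sum_condition_def
proof
  fix u
  have "(\<Sum>j<l. \<Sum>i<k. u i * A i j) = (\<Sum>i<k. u i * (\<Sum>j<l. A i j))"
    by (simp add: sum_distrib_left sum.swap[of _ "{..<l}"])
  then show "(\<Sum>i<k. scale (u i) (b i)) \<in> range (scale (\<Sum>i<k. u i * (\<Sum>j<l. A i j)))"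
    using not_partition_regular_single_equation
        [of "\<Sum>i<k. scale (u i) (b i)" "\<lambda>j. \<Sum>i<k. u i * A i j" l]
      partition_regular_row_combination[OF assms, of u]
    by argo
qed

lemma row_sum_condition_pair:
  assumes "row_sum_condition scale s b k" "i1 < k" "i2 < k"
  shows "scale \<alpha> (b i1) + scale \<beta> (b i2) \<in> range (scale (\<alpha> * s i1 + \<beta> * s i2))"
proof -
  define u where "u i = (if i = i1 then \<alpha> else 0) + (if i = i2 then \<beta> else 0)" for i
  have "(\<Sum>i<k. scale (u i) (b i)) = scale \<alpha> (b i1) + scale \<beta> (b i2)"
    unfolding u_def using assms(2,3)
    by (simp add: scale_left_distrib sum.distrib if_distrib[of "\<lambda>r. scale r _"] cong: if_cong)
  moreover have "(\<Sum>i<k. u i * s i) = \<alpha> * s i1 + \<beta> * s i2"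
    unfolding u_def using assms(2,3)
    by (simp add: distrib_right sum.distrib if_distrib[of "\<lambda>r. r * _"] cong: if_cong)
  ultimately show ?thesis using assms(1) unfolding row_sum_condition_def by metis
qed

lemma row_sum_condition_single:
  assumes "row_sum_condition scale s b k" "i < k"
  shows "b i \<in> range (scale (s i))"
  using row_sum_condition_pair[OF assms assms(2), of 1 0] by simp

lemma row_sum_condition_cross:
  assumes "row_sum_condition scale s b k" "i < k" "j < k"
  shows "scale (s j) (b i) = scale (s i) (b j)"
  using row_sum_condition_pair[OF assms, of "s j" "- s i"] by (auto simp: mult.commute)

lemma constant_solution_imp_partition_regular:
  assumes "solves scale A k l b (\<lambda>_. m)" "\<exists>i<k. b i \<noteq> 0"
  shows "partition_regular scale A k l b"
proof -
  obtain i where i: "i < k" "b i \<noteq> 0" using assms(2) by blast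
  then have "(\<Sum>j<l. scale (A i j) m) \<noteq> 0" using assms(1) unfolding solves_def by simp
  then have "m \<noteq> 0" "0 < l" by (auto intro: gr0I)
  then show ?thesis
    unfolding partition_regular_def using assms(1) by (intro allI impI exI[of _ "\<lambda>_. m"]) auto
qed

text \<open>Case (a).\<close>

lemma row_sum_condition_torsion_free:
  assumes tf: "torsion_free scale" and N: "row_sum_condition scale s b k"
  shows "\<exists>x. \<forall>i<k. scale (s i) x = b i"
proof (cases "\<exists>i0<k. s i0 \<noteq> 0")
  case True
  then obtain i0 where i0: "i0 < k" "s i0 \<noteq> 0" by blast
  obtain x where x: "b i0 = scale (s i0) x" using row_sum_condition_single[OF N i0(1)] by blast
  have "scale (s i) x = b i" if i: "i < k" for i
  proof -
    have "scale (s i0) (scale (s i) x - b i) = scale (s i) (b i0) - scale (s i0) (b i)"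
      using x by (simp add: scale_right_diff_distrib mult.commute)
    also have "\<dots> = 0" using row_sum_condition_cross[OF N i0(1) i] by simp
    finally show ?thesis using tf i0(2) unfolding torsion_free_def by (metis eq_iff_diff_eq_0)
  qed
  then show ?thesis by blast
next
  case False
  then show ?thesis using row_sum_condition_single[OF N] by auto
qed

text \<open>If the ideal generated by the row sums is invertible, in the form that \<open>\<Sum>\<^sub>i c\<^sub>i\<^sub>i = 1\<close> and
  \<open>c\<^sub>i\<^sub>i s\<^sub>j = c\<^sub>i\<^sub>j s\<^sub>i\<close> (think \<open>c\<^sub>i\<^sub>j = p\<^sub>i s\<^sub>j / g\<close> with \<open>\<Sum>\<^sub>i p\<^sub>i s\<^sub>i = g\<close>), then
  \<open>x = \<Sum>\<^sub>i c\<^sub>i\<^sub>i m\<^sub>i\<close> with \<open>b\<^sub>i = s\<^sub>i m\<^sub>i\<close> is a constant solution.\<close>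

lemma row_sum_condition_invertible:
  assumes N: "row_sum_condition scale s b k"
    and diag: "(\<Sum>i<k. c i i) = 1" and cross: "\<And>i j. i < k \<Longrightarrow> j < k \<Longrightarrow> c i i * s j = c i j * s i"
  shows "\<exists>x. \<forall>j<k. scale (s j) x = b j"
proof -
  have "\<forall>i. \<exists>y. i < k \<longrightarrow> b i = scale (s i) y"
    using row_sum_condition_single[OF N] by blast
  then obtain m where m: "\<And>i. i < k \<Longrightarrow> b i = scale (s i) (m i)" by metis
  have combination: "(\<Sum>i<k. scale (c i j) (b i)) = b j" if j: "j < k" for j
  proof -
    define u where "u i = c i j - (if i = j then 1 else 0)" for i
    have "(\<Sum>i<k. (if i = j then 1 else 0) * s i) = (\<Sum>i<k. if i = j then s i else 0)"
      "(\<Sum>i<k. scale (if i = j then 1 else 0) (b i)) = (\<Sum>i<k. if i = j then b i else 0)"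
      by (intro sum.cong refl; simp)+
    then have delta: "(\<Sum>i<k. (if i = j then 1 else 0) * s i) = s j"
      "(\<Sum>i<k. scale (if i = j then 1 else 0) (b i)) = b j"
      using j by simp_all
    have "(\<Sum>i<k. c i j * s i) = (\<Sum>i<k. c i i * s j)"
      using cross[OF _ j] by (intro sum.cong refl) simp
    then have "(\<Sum>i<k. u i * s i) = (\<Sum>i<k. c i i) * s j - s j"
      unfolding u_def left_diff_distrib sum_subtractf delta(1) by (simp add: sum_distrib_right)
    then have "(\<Sum>i<k. scale (u i) (b i)) \<in> range (scale 0)"
      using N diag unfolding row_sum_condition_def by (metis diff_self mult_1)
    moreover have "(\<Sum>i<k. scale (u i) (b i)) = (\<Sum>i<k. scale (c i j) (b i)) - b j"
      unfolding u_def scale_left_diff_distrib sum_subtractf delta(2) ..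
    ultimately show ?thesis by auto
  qed
  have "scale (s j) (\<Sum>i<k. scale (c i i) (m i)) = b j" if j: "j < k" for j
  proof -
    have "scale (s j) (\<Sum>i<k. scale (c i i) (m i)) = (\<Sum>i<k. scale (c i i * s j) (m i))"
      by (simp add: scale_sum_right mult.commute)
    also have "\<dots> = (\<Sum>i<k. scale (c i j) (scale (s i) (m i)))"
      using cross[OF _ j] by (intro sum.cong refl) simp
    also have "\<dots> = b j" using m combination[OF j] by simp
    finally show ?thesis .
  qed
  then show ?thesis by blast
qed

end

section \<open>Ideals and reduced rings\<close>

lemma is_ideal_0: "is_ideal I \<Longrightarrow> 0 \<in> I"
  and is_ideal_add: "is_ideal I \<Longrightarrow> x \<in> I \<Longrightarrow> y \<in> I \<Longrightarrow> x + y \<in> I"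
  and is_ideal_mult_left: "is_ideal I \<Longrightarrow> x \<in> I \<Longrightarrow> r * x \<in> I"
  unfolding is_ideal_def by blast+

lemma is_ideal_mult_right: "is_ideal I \<Longrightarrow> x \<in> I \<Longrightarrow> x * r \<in> I"
  using is_ideal_mult_left[of I x r] by (simp add: mult.commute)

lemma is_ideal_diff:
  assumes "is_ideal I" "x \<in> I" "y \<in> I"
  shows "x - y \<in> I"
  using is_ideal_add[OF assms(1,2) is_ideal_mult_left[OF assms(1,3), where r = "- 1"]] by simp

lemma is_ideal_sum: "is_ideal I \<Longrightarrow> (\<And>x. x \<in> S \<Longrightarrow> g x \<in> I) \<Longrightarrow> sum g S \<in> I"
  by (induction S rule: infinite_finite_induct) (simp_all add: is_ideal_0 is_ideal_add)

lemma is_ideal_eq_UNIV: "is_ideal I \<Longrightarrow> 1 \<in> I \<Longrightarrow> I = UNIV"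
  using is_ideal_mult_left[of I 1] by auto

lemma is_ideal_Union_chain:
  assumes "\<C> \<noteq> {}" "\<And>I. I \<in> \<C> \<Longrightarrow> is_ideal I" "\<And>I J. I \<in> \<C> \<Longrightarrow> J \<in> \<C> \<Longrightarrow> I \<subseteq> J \<or> J \<subseteq> I"
  shows "is_ideal (\<Union>\<C>)"
  unfolding is_ideal_def
proof (intro conjI ballI allI)
  show "0 \<in> \<Union>\<C>" using assms(1,2) is_ideal_0 by blast
next
  fix x y assume "x \<in> \<Union>\<C>" "y \<in> \<Union>\<C>"
  then obtain I J where "I \<in> \<C>" "J \<in> \<C>" "x \<in> I" "y \<in> J" by blast
  then show "x + y \<in> \<Union>\<C>" using assms(3)[of I J] assms(2) is_ideal_add by blast
next
  fix r x assume "x \<in> \<Union>\<C>"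
  then show "r * x \<in> \<Union>\<C>" using assms(2) is_ideal_mult_left by blast
qed

lemma prime_idealD: "prime_ideal P \<Longrightarrow> a * b \<in> P \<Longrightarrow> a \<in> P \<or> b \<in> P"
  and prime_ideal_is_ideal: "prime_ideal P \<Longrightarrow> is_ideal P"
  unfolding prime_ideal_def by blast+

lemma prime_ideal_one: "prime_ideal P \<Longrightarrow> 1 \<notin> P"
  unfolding prime_ideal_def using is_ideal_eq_UNIV by blast

lemma prime_ideal_prod_notin:
  assumes "prime_ideal P" "finite S" "\<And>x. x \<in> S \<Longrightarrow> g x \<notin> P"
  shows "prod g S \<notin> P"
  using assms(2,3)
  by (induction S rule: finite_induct)
    (auto simp: prime_ideal_one[OF assms(1)] dest: prime_idealD[OF assms(1)])

definition ideal_adjoin :: "'a::comm_ring_1 set \<Rightarrow> 'a \<Rightarrow> 'a set" where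
  "ideal_adjoin I a = {p + r * a | p r. p \<in> I}"

lemma is_ideal_ideal_adjoin:
  assumes "is_ideal I"
  shows "is_ideal (ideal_adjoin I a)"
  unfolding is_ideal_def
proof (intro conjI ballI allI)
  show "0 \<in> ideal_adjoin I a"
    unfolding ideal_adjoin_def using is_ideal_0[OF assms] by (intro CollectI exI[of _ 0]) simp
next
  fix x y assume "x \<in> ideal_adjoin I a" "y \<in> ideal_adjoin I a"
  then obtain p r p' r' where "x = p + r * a" "y = p' + r' * a" "p \<in> I" "p' \<in> I"
    unfolding ideal_adjoin_def by blast
  then have "x + y = (p + p') + (r + r') * a" "p + p' \<in> I"
    using is_ideal_add[OF assms] by (auto simp: algebra_simps)
  then show "x + y \<in> ideal_adjoin I a" unfolding ideal_adjoin_def by blast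
next
  fix t x assume "x \<in> ideal_adjoin I a"
  then obtain p r where "x = p + r * a" "p \<in> I" unfolding ideal_adjoin_def by blast
  then have "t * x = t * p + (t * r) * a" "t * p \<in> I"
    using is_ideal_mult_left[OF assms] by (auto simp: algebra_simps)
  then show "t * x \<in> ideal_adjoin I a" unfolding ideal_adjoin_def by blast
qed

lemma subset_ideal_adjoin: "is_ideal I \<Longrightarrow> I \<subseteq> ideal_adjoin I a"
  unfolding ideal_adjoin_def by (force intro: exI[of _ 0])

lemma mem_ideal_adjoin: "is_ideal I \<Longrightarrow> a \<in> ideal_adjoin I a"
  unfolding ideal_adjoin_def using is_ideal_0 by (force intro: exI[of _ 1])

lemma ideal_adjoin_mult:
  assumes I: "is_ideal I" and "a * b \<in> I" "x \<in> ideal_adjoin I a" "y \<in> ideal_adjoin I b"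
  shows "x * y \<in> I"
proof -
  obtain p r q t where "x = p + r * a" "y = q + t * b" "p \<in> I" "q \<in> I"
    using assms(3,4) unfolding ideal_adjoin_def by blast
  then have "x * y = p * y + (r * a) * q + (r * t) * (a * b)" by (simp add: algebra_simps)
  moreover have "p * y \<in> I" "(r * a) * q \<in> I" "(r * t) * (a * b) \<in> I"
    using is_ideal_mult_right[OF I \<open>p \<in> I\<close>] is_ideal_mult_left[OF I \<open>q \<in> I\<close>]
      is_ideal_mult_left[OF I assms(2)] by simp_all
  ultimately show ?thesis using is_ideal_add[OF I] by metis
qed

text \<open>Krull: by Zorn's lemma, an ideal maximal among those avoiding the powers of \<open>y\<close> is prime.\<close>

lemma exists_prime_ideal_disjoint_powers:
  assumes J: "is_ideal J" and y: "\<And>n. y ^ n \<notin> J"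
  shows "\<exists>P. prime_ideal P \<and> J \<subseteq> P \<and> (\<forall>n. y ^ n \<notin> P)"
proof -
  define \<A> where "\<A> = {I. is_ideal I \<and> J \<subseteq> I \<and> (\<forall>n. y ^ n \<notin> I)}"
  have "\<exists>M\<in>\<A>. \<forall>X\<in>\<A>. M \<subseteq> X \<longrightarrow> X = M"
  proof (rule subset_Zorn_nonempty)
    show "\<A> \<noteq> {}" using J y unfolding \<A>_def by blast
  next
    fix \<C> assume "\<C> \<noteq> {}" "subset.chain \<A> \<C>"
    then show "\<Union>\<C> \<in> \<A>"
      using is_ideal_Union_chain[of \<C>] unfolding \<A>_def subset_chain_def by blast
  qed
  then obtain P where "P \<in> \<A>" and max: "\<forall>X\<in>\<A>. P \<subseteq> X \<longrightarrow> X = P" by blast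
  then have P: "is_ideal P" "J \<subseteq> P" "\<forall>n. y ^ n \<notin> P" unfolding \<A>_def by auto
  have power: "\<exists>n. y ^ n \<in> ideal_adjoin P a" if "a \<notin> P" for a
  proof (rule ccontr)
    assume "\<nexists>n. y ^ n \<in> ideal_adjoin P a"
    moreover have "J \<subseteq> ideal_adjoin P a" using subset_ideal_adjoin[OF P(1)] P(2) by blast
    ultimately have "ideal_adjoin P a \<in> \<A>"
      using is_ideal_ideal_adjoin[OF P(1)] unfolding \<A>_def by blast
    then have "ideal_adjoin P a = P" using max subset_ideal_adjoin[OF P(1)] by blast
    then show False using mem_ideal_adjoin[OF P(1), of a] that by simp
  qed
  have "a \<in> P \<or> b \<in> P" if "a * b \<in> P" for a b
  proof (rule ccontr)
    assume "\<not> (a \<in> P \<or> b \<in> P)"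
    then obtain n m where "y ^ n \<in> ideal_adjoin P a" "y ^ m \<in> ideal_adjoin P b" using power by blast
    then have "y ^ (n + m) \<in> P" using ideal_adjoin_mult[OF P(1) that] by (simp add: power_add)
    then show False using P(3) by blast
  qed
  moreover have "P \<noteq> UNIV" using P(3) by blast
  ultimately show ?thesis using P unfolding prime_ideal_def by blast
qed

lemma prime_ideal_Inter_chain:
  assumes "\<D> \<noteq> {}" and prime: "\<And>Q. Q \<in> \<D> \<Longrightarrow> prime_ideal Q"
    and chain: "\<And>Q Q'. Q \<in> \<D> \<Longrightarrow> Q' \<in> \<D> \<Longrightarrow> Q \<subseteq> Q' \<or> Q' \<subseteq> Q"
  shows "prime_ideal (\<Inter>\<D>)"
proof -
  have ideal: "is_ideal (\<Inter>\<D>)"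
    using prime prime_ideal_is_ideal unfolding is_ideal_def by (simp add: Ball_def) blast
  have "1 \<notin> \<Inter>\<D>" using assms(1) prime prime_ideal_one by blast
  then have "\<Inter>\<D> \<noteq> UNIV" by blast
  moreover have "a \<in> \<Inter>\<D> \<or> b \<in> \<Inter>\<D>" if ab: "a * b \<in> \<Inter>\<D>" for a b
  proof (rule ccontr)
    assume "\<not> (a \<in> \<Inter>\<D> \<or> b \<in> \<Inter>\<D>)"
    then obtain Q1 Q2 where Q: "Q1 \<in> \<D>" "a \<notin> Q1" "Q2 \<in> \<D>" "b \<notin> Q2" by blast
    with chain[of Q1 Q2] consider "a \<notin> Q1" "b \<notin> Q1" | "a \<notin> Q2" "b \<notin> Q2" by blast
    then show False using prime_idealD prime ab Q by (metis InterE)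
  qed
  ultimately show ?thesis using ideal unfolding prime_ideal_def by blast
qed

text \<open>Zorn's lemma, applied to the complements of the primes below \<open>P\<close>.\<close>

lemma exists_minimal_prime_ideal_below:
  assumes P: "prime_ideal (P::'a::comm_ring_1 set)"
  shows "\<exists>Q. minimal_prime_ideal Q \<and> Q \<subseteq> P"
proof -
  define \<A> where "\<A> = {- Q | Q::'a set. prime_ideal Q \<and> Q \<subseteq> P}"
  have "\<exists>M\<in>\<A>. \<forall>X\<in>\<A>. M \<subseteq> X \<longrightarrow> X = M"
  proof (rule subset_Zorn_nonempty)
    show "\<A> \<noteq> {}" using P unfolding \<A>_def by blast
  next
    fix \<C> assume "\<C> \<noteq> {}" and ch: "subset.chain \<A> \<C>"
    have compl: "\<And>X. X \<in> \<C> \<Longrightarrow> prime_ideal (- X) \<and> - X \<subseteq> P"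
      using ch unfolding \<A>_def subset_chain_def by auto
    moreover have "Q \<subseteq> Q' \<or> Q' \<subseteq> Q" if "Q \<in> uminus ` \<C>" "Q' \<in> uminus ` \<C>" for Q Q'
      using that ch unfolding subset_chain_def by (metis Compl_subset_Compl_iff imageE)
    ultimately have "prime_ideal (\<Inter>(uminus ` \<C>))"
      using \<open>\<C> \<noteq> {}\<close> by (intro prime_ideal_Inter_chain) auto
    moreover have "\<Inter>(uminus ` \<C>) \<subseteq> P" using \<open>\<C> \<noteq> {}\<close> compl by blast
    moreover have "\<Union>\<C> = - \<Inter>(uminus ` \<C>)" by auto
    ultimately show "\<Union>\<C> \<in> \<A>" unfolding \<A>_def by blast
  qed
  then obtain Q where Q: "prime_ideal Q" "Q \<subseteq> P" and max: "\<forall>X\<in>\<A>. - Q \<subseteq> X \<longrightarrow> X = - Q"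
    unfolding \<A>_def by blast
  have "Q' = Q" if "prime_ideal Q'" "Q' \<subseteq> Q" for Q'
  proof -
    have "- Q' \<in> \<A>" using that Q(2) unfolding \<A>_def by blast
    then show ?thesis using max that(2) by (metis Compl_subset_Compl_iff double_compl)
  qed
  then show ?thesis using Q unfolding minimal_prime_ideal_def by blast
qed

lemma reduced_ring_Inter_minimal_prime_ideals:
  assumes red: "reduced_ring TYPE('a::comm_ring_1)" and y: "\<And>P. minimal_prime_ideal P \<Longrightarrow> (y::'a) \<in> P"
  shows "y = 0"
proof (rule ccontr)
  assume "y \<noteq> 0"
  then have "y ^ n \<notin> {0}" for n using red unfolding reduced_ring_def by blast
  moreover have "is_ideal {0::'a}" unfolding is_ideal_def by simp
  ultimately obtain P where P: "prime_ideal P" "\<forall>n. y ^ n \<notin> P"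
    using exists_prime_ideal_disjoint_powers by blast
  obtain Q where "minimal_prime_ideal Q" "Q \<subseteq> P"
    using exists_minimal_prime_ideal_below[OF P(1)] by blast
  then show False using y P(2)[rule_format, of 1] by auto
qed

lemma exists_in_other_prime_ideals:
  assumes fin: "finite \<P>" and P: "P \<in> \<P>" and prime: "\<And>Q. Q \<in> \<P> \<Longrightarrow> prime_ideal Q"
    and incomparable: "\<And>Q Q'. Q \<in> \<P> \<Longrightarrow> Q' \<in> \<P> \<Longrightarrow> Q' \<subseteq> Q \<Longrightarrow> Q' = Q"
  shows "\<exists>y. y \<notin> P \<and> (\<forall>Q\<in>\<P> - {P}. y \<in> Q)"
proof -
  have "\<forall>Q\<in>\<P> - {P}. \<exists>z. z \<in> Q \<and> z \<notin> P"
    using incomparable[OF P] by blast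
  then obtain z where z: "\<forall>Q\<in>\<P> - {P}. z Q \<in> Q \<and> z Q \<notin> P"
    by (rule bchoice_iff[THEN iffD1, THEN exE])
  have "prod z (\<P> - {P}) \<notin> P"
    by (rule prime_ideal_prod_notin[OF prime[OF P]]) (use fin z in auto)
  moreover have "prod z (\<P> - {P}) \<in> Q" if Q: "Q \<in> \<P> - {P}" for Q
  proof -
    have "prod z (\<P> - {P}) = z Q * prod z (\<P> - {P} - {Q})"
      using prod.remove[of "\<P> - {P}" Q z] fin Q by simp
    moreover have "Q \<in> \<P>" "z Q \<in> Q" using z Q by blast+
    ultimately show ?thesis
      using is_ideal_mult_right[OF prime_ideal_is_ideal[OF prime]] by metis
  qed
  ultimately show ?thesis by (intro exI[of _ "prod z (\<P> - {P})"] conjI ballI)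
qed

text \<open>Prime avoidance: for each \<open>P\<close> pick \<open>i\<^sub>P\<close> with \<open>s (i\<^sub>P) \<notin> P\<close> and \<open>y\<^sub>P\<close> lying in all the other
  primes but not in \<open>P\<close>; then \<open>\<Sum>\<^sub>P y\<^sub>P s (i\<^sub>P)\<close> lies in none of them.\<close>

lemma exists_combination_avoiding_prime_ideals:
  fixes s :: "nat \<Rightarrow> 'a::comm_ring_1"
  assumes fin: "finite \<P>" and prime: "\<And>P. P \<in> \<P> \<Longrightarrow> prime_ideal P"
    and incomparable: "\<And>P P'. P \<in> \<P> \<Longrightarrow> P' \<in> \<P> \<Longrightarrow> P' \<subseteq> P \<Longrightarrow> P' = P"
    and s: "\<And>P. P \<in> \<P> \<Longrightarrow> \<exists>i<k. s i \<notin> P"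
  shows "\<exists>u. \<forall>P\<in>\<P>. (\<Sum>i<k. u i * s i) \<notin> P"
proof -
  have "\<forall>P\<in>\<P>. \<exists>i. i < k \<and> s i \<notin> P" using s by blast
  then obtain idx where idx: "\<forall>P\<in>\<P>. idx P < k \<and> s (idx P) \<notin> P"
    by (rule bchoice_iff[THEN iffD1, THEN exE])
  have "\<forall>P\<in>\<P>. \<exists>y. y \<notin> P \<and> (\<forall>Q\<in>\<P> - {P}. y \<in> Q)"
    using exists_in_other_prime_ideals[OF fin _ prime incomparable] by blast
  then obtain y where y: "\<forall>P\<in>\<P>. y P \<notin> P \<and> (\<forall>Q\<in>\<P> - {P}. y P \<in> Q)"
    by (rule bchoice_iff[THEN iffD1, THEN exE])
  define u where "u i = (\<Sum>P\<in>\<P>. if idx P = i then y P else 0)" for i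
  have d: "(\<Sum>i<k. u i * s i) = (\<Sum>P\<in>\<P>. y P * s (idx P))"
  proof -
    have "(\<Sum>i<k. u i * s i) = (\<Sum>P\<in>\<P>. \<Sum>i<k. if idx P = i then y P * s i else 0)"
      unfolding u_def sum_distrib_right
      by (subst sum.swap) (simp add: if_distrib[of "\<lambda>r. r * _"] cong: if_cong)
    also have "\<dots> = (\<Sum>P\<in>\<P>. y P * s (idx P))"
      using idx by (intro sum.cong refl) simp
    finally show ?thesis .
  qed
  have "(\<Sum>P'\<in>\<P>. y P' * s (idx P')) \<notin> P" if P: "P \<in> \<P>" for P
  proof
    assume sum: "(\<Sum>P'\<in>\<P>. y P' * s (idx P')) \<in> P"
    have I: "is_ideal P" using prime_ideal_is_ideal[OF prime[OF P]] .
    have rest: "(\<Sum>P'\<in>\<P> - {P}. y P' * s (idx P')) \<in> P"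
    proof (rule is_ideal_sum[OF I])
      fix P' assume "P' \<in> \<P> - {P}"
      then have "y P' \<in> P" using y P by blast
      then show "y P' * s (idx P') \<in> P" by (rule is_ideal_mult_right[OF I])
    qed
    have "y P * s (idx P) \<in> P"
      using is_ideal_diff[OF I sum rest] sum.remove[OF fin P, of "\<lambda>P'. y P' * s (idx P')"] by simp
    then show False using prime_idealD[OF prime[OF P]] y P idx by blast
  qed
  then have "\<forall>P\<in>\<P>. (\<Sum>i<k. u i * s i) \<notin> P" unfolding d by blast
  then show ?thesis by blast
qed

lemma module_times: "module ((*) :: 'a::comm_ring_1 \<Rightarrow> 'a \<Rightarrow> 'a)"
  by unfold_locales (simp_all add: algebra_simps)

lemma minimal_prime_ideal_prime: "minimal_prime_ideal P \<Longrightarrow> prime_ideal P"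
  unfolding minimal_prime_ideal_def by blast

lemma minimal_prime_ideal_minimal: "minimal_prime_ideal P \<Longrightarrow> prime_ideal Q \<Longrightarrow> Q \<subseteq> P \<Longrightarrow> Q = P"
  unfolding minimal_prime_ideal_def by metis

lemma exists_combination_avoiding_minimal_prime_ideals:
  fixes s :: "nat \<Rightarrow> 'a::comm_ring_1"
  assumes "finite {P :: 'a set. minimal_prime_ideal P}"
  shows "\<exists>u. \<forall>P. minimal_prime_ideal P \<and> (\<exists>i<k. s i \<notin> P) \<longrightarrow> (\<Sum>i<k. u i * s i) \<notin> P"
proof -
  let ?\<P> = "{P. minimal_prime_ideal P \<and> (\<exists>i<k. s i \<notin> P)}"
  have "finite ?\<P>" using assms by (rule rev_finite_subset) blast
  moreover have "prime_ideal P" if "P \<in> ?\<P>" for P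
    using that minimal_prime_ideal_prime by blast
  moreover have "P' = P" if "P \<in> ?\<P>" "P' \<in> ?\<P>" "P' \<subseteq> P" for P P'
    using minimal_prime_ideal_minimal[OF _ minimal_prime_ideal_prime that(3)] that by simp
  moreover have "\<exists>i<k. s i \<notin> P" if "P \<in> ?\<P>" for P
    using that by blast
  ultimately have "\<exists>u. \<forall>P\<in>?\<P>. (\<Sum>i<k. u i * s i) \<notin> P"
    by (rule exists_combination_avoiding_prime_ideals)
  then show ?thesis by blast
qed

lemma row_sum_condition_annihilates:
  fixes s b :: "nat \<Rightarrow> 'a::comm_ring_1"
  assumes N: "row_sum_condition (*) s b k" and i: "i < k"
    and x: "(\<Sum>j<k. u j * b j) = (\<Sum>j<k. u j * s j) * x"
  shows "(\<Sum>j<k. u j * s j) * (s i * x - b i) = 0"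
proof -
  have "(\<Sum>j<k. u j * s j) * (s i * x - b i)
      = s i * ((\<Sum>j<k. u j * s j) * x) - (\<Sum>j<k. u j * s j) * b i"
    by (simp add: algebra_simps)
  also have "\<dots> = (\<Sum>j<k. s i * (u j * b j) - u j * s j * b i)"
    unfolding x[symmetric] by (simp add: sum_distrib_left sum_distrib_right sum_subtractf)
  also have "\<dots> = (\<Sum>j<k. u j * (s i * b j - s j * b i))"
    by (intro sum.cong refl) (simp add: algebra_simps)
  also have "\<dots> = 0"
  proof (rule sum.neutral, rule ballI)
    fix j assume "j \<in> {..<k}"
    then have "s j * b i = s i * b j"
      using module.row_sum_condition_cross[OF module_times N i, of j] by simp
    then show "u j * (s i * b j - s j * b i) = 0" by simp
  qed
  finally show ?thesis .
qed

text \<open>Case (c): choose \<open>u\<close> so that \<open>d = \<Sum>\<^sub>i u\<^sub>i s\<^sub>i\<close> avoids every minimal prime not containing all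
  \<open>s\<^sub>i\<close>. If \<open>\<Sum>\<^sub>i u\<^sub>i b\<^sub>i = d x\<close>, then \<open>d (s\<^sub>i x - b\<^sub>i) = 0\<close>, so \<open>s\<^sub>i x - b\<^sub>i\<close> lies in every minimal
  prime, hence vanishes.\<close>

lemma row_sum_condition_reduced_ring:
  fixes s b :: "nat \<Rightarrow> 'a::comm_ring_1"
  assumes red: "reduced_ring TYPE('a)" and fin: "finite {P :: 'a set. minimal_prime_ideal P}"
    and N: "row_sum_condition (*) s b k"
  shows "\<exists>x. \<forall>i<k. s i * x = b i"
proof -
  from exists_combination_avoiding_minimal_prime_ideals[OF fin]
  obtain u where u: "\<forall>P. minimal_prime_ideal P \<and> (\<exists>i<k. s i \<notin> P) \<longrightarrow> (\<Sum>i<k. u i * s i) \<notin> P"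
    ..
  have "(\<Sum>i<k. u i * b i) \<in> range ((*) (\<Sum>i<k. u i * s i))"
    using N unfolding row_sum_condition_def by (rule allE[of _ u])
  then obtain x where x: "(\<Sum>i<k. u i * b i) = (\<Sum>i<k. u i * s i) * x" by blast
  have "s i * x = b i" if i: "i < k" for i
  proof -
    have "s i * x - b i \<in> P" if P: "minimal_prime_ideal P" for P
    proof -
      have I: "is_ideal P" using prime_ideal_is_ideal[OF minimal_prime_ideal_prime[OF P]] .
      show ?thesis
      proof (cases "\<exists>j<k. s j \<notin> P")
        case True
        have "(\<Sum>j<k. u j * s j) * (s i * x - b i) \<in> P"
          using row_sum_condition_annihilates[OF N i x] is_ideal_0[OF I] by simp
        then show ?thesis using prime_idealD[OF minimal_prime_ideal_prime[OF P]] u P True by blast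
      next
        case False
        then have "s i \<in> P" using i by blast
        moreover obtain m where "b i = s i * m"
          using module.row_sum_condition_single[OF module_times N i] by blast
        ultimately show ?thesis using is_ideal_diff[OF I] is_ideal_mult_right[OF I] by simp
      qed
    qed
    then have "s i * x - b i = 0" by (rule reduced_ring_Inter_minimal_prime_ideals[OF red])
    then show ?thesis by simp
  qed
  then show ?thesis by blast
qed

lemma row_sum_condition_free_rank_one:
  fixes scale :: "'a::comm_ring_1 \<Rightarrow> 'b::ab_group_add \<Rightarrow> 'b"
  assumes f: "bij f" "module_hom scale (*) f"
    and red: "reduced_ring TYPE('a)" and fin: "finite {P :: 'a set. minimal_prime_ideal P}"
    and N: "row_sum_condition scale s b k"
  shows "\<exists>x. \<forall>i<k. scale (s i) x = b i"
proof -
  have hom: "f (scale r y) = r * f y" for r y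
    using module_hom.scale[OF f(2)] .
  have "row_sum_condition (*) s (f \<circ> b) k"
    unfolding row_sum_condition_def
  proof
    fix u
    have "(\<Sum>i<k. scale (u i) (b i)) \<in> range (scale (\<Sum>i<k. u i * s i))"
      using N unfolding row_sum_condition_def by (rule allE[of _ u])
    then obtain y where y: "(\<Sum>i<k. scale (u i) (b i)) = scale (\<Sum>i<k. u i * s i) y" by blast
    have "(\<Sum>i<k. u i * f (b i)) = f (\<Sum>i<k. scale (u i) (b i))"
      by (simp add: module_hom.sum[OF f(2)] hom)
    also have "\<dots> = (\<Sum>i<k. u i * s i) * f y" by (simp add: y hom)
    finally have "(\<Sum>i<k. u i * f (b i)) = (\<Sum>i<k. u i * s i) * f y" .
    then show "(\<Sum>i<k. u i * (f \<circ> b) i) \<in> range ((*) (\<Sum>i<k. u i * s i))" by auto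
  qed
  from row_sum_condition_reduced_ring[OF red fin this]
  obtain x' where x': "\<And>i. i < k \<Longrightarrow> s i * x' = f (b i)" by auto
  have "scale (s i) (inv f x') = b i" if "i < k" for i
    using x'[OF that] f(1) hom by (metis bij_inv_eq_iff)
  then show ?thesis by blast
qed

section \<open>Dedekind domains\<close>

lemma noetherian_ascending_chain:
  fixes I :: "nat \<Rightarrow> 'a::comm_ring_1 set"
  assumes noeth: "noetherian_ring TYPE('a)" and ideal: "\<And>n. is_ideal (I n)" and mono: "mono I"
  shows "\<exists>N. \<Union>(range I) \<subseteq> I N"
proof -
  have chain: "I m \<subseteq> I n \<or> I n \<subseteq> I m" for m n
    using mono nat_le_linear[of m n] unfolding mono_def by blast
  have "is_ideal (\<Union>(range I))"
    using ideal chain by (intro is_ideal_Union_chain) auto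
  from noeth[unfolded noetherian_ring_def, rule_format, OF this]
  obtain F where F: "finite F" "F \<subseteq> \<Union>(range I)" "\<Union>(range I) = {\<Sum>f\<in>F. c f * f | c. True}"
    by blast
  have "\<forall>x\<in>F. \<exists>n. x \<in> I n" using F(2) by blast
  then obtain idx where idx: "\<forall>x\<in>F. x \<in> I (idx x)" by (rule bchoice_iff[THEN iffD1, THEN exE])
  define N where "N = Max (insert 0 (idx ` F))"
  have "F \<subseteq> I N"
  proof
    fix x assume "x \<in> F"
    then have "idx x \<le> N" unfolding N_def using F(1) by simp
    then show "x \<in> I N" using mono idx \<open>x \<in> F\<close> unfolding mono_def by blast
  qed
  then have "(\<Sum>f\<in>F. c f * f) \<in> I N" for c
    by (intro is_ideal_sum[OF ideal] is_ideal_mult_left[OF ideal]) blast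
  then have "\<Union>(range I) \<subseteq> I N"
    unfolding F(3) by blast
  then show ?thesis ..
qed

lemma noetherian_wf_ideal_psupset:
  assumes noeth: "noetherian_ring TYPE('a::comm_ring_1)"
  shows "wf {(J, I :: 'a set). is_ideal I \<and> is_ideal J \<and> I \<subset> J}"
  unfolding wf_iff_no_infinite_down_chain
proof
  assume "\<exists>f. \<forall>i. (f (Suc i), f i) \<in> {(J, I :: 'a set). is_ideal I \<and> is_ideal J \<and> I \<subset> J}"
  then obtain I :: "nat \<Rightarrow> 'a set" where I: "\<And>i. is_ideal (I i)" "\<And>i. I i \<subset> I (Suc i)" by blast
  then have "mono I" unfolding mono_iff_le_Suc by (simp add: less_imp_le)
  with noetherian_ascending_chain[of I] noeth I(1) obtain N where "\<Union>(range I) \<subseteq> I N" by blast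
  then show False using I(2)[of N] by blast
qed

text \<open>\<open>prod_ideals_subset [P\<^sub>1, \<dots>, P\<^sub>n] I\<close> expresses \<open>P\<^sub>1 \<cdots> P\<^sub>n \<subseteq> I\<close> without forming the
  product ideal: it suffices that every product of elements \<open>x\<^sub>i \<in> P\<^sub>i\<close> lies in \<open>I\<close>.\<close>

definition prod_ideals_subset :: "'a::comm_ring_1 set list \<Rightarrow> 'a set \<Rightarrow> bool" where
  "prod_ideals_subset Ps I \<longleftrightarrow> (\<forall>xs. list_all2 (\<in>) xs Ps \<longrightarrow> prod_list xs \<in> I)"

definition nonzero_prime_ideals :: "'a::comm_ring_1 set list \<Rightarrow> bool" where
  "nonzero_prime_ideals Ps \<longleftrightarrow> (\<forall>P\<in>set Ps. prime_ideal P \<and> P \<noteq> {0})"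

lemma prod_ideals_subset_append:
  assumes I: "is_ideal I" and "a * b \<in> I"
    and "prod_ideals_subset Ps (ideal_adjoin I a)" "prod_ideals_subset Qs (ideal_adjoin I b)"
  shows "prod_ideals_subset (Ps @ Qs) I"
  unfolding prod_ideals_subset_def
proof (intro allI impI)
  fix xs assume "list_all2 (\<in>) xs (Ps @ Qs)"
  then obtain ys zs where "xs = ys @ zs" "list_all2 (\<in>) ys Ps" "list_all2 (\<in>) zs Qs"
    unfolding list_all2_append2 by blast
  then show "prod_list xs \<in> I"
    using ideal_adjoin_mult[OF I assms(2)] assms(3,4) unfolding prod_ideals_subset_def by simp
qed

text \<open>Noetherian induction: if \<open>I\<close> is not prime, pick \<open>a b \<in> I\<close> with \<open>a, b \<notin> I\<close>; the products
  contained in the larger ideals \<open>I + (a)\<close> and \<open>I + (b)\<close> multiply into \<open>I\<close>.\<close>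

lemma exists_prime_ideals_prod_subset:
  assumes noeth: "noetherian_ring TYPE('a::comm_ring_1)"
  shows "is_ideal (I :: 'a set) \<Longrightarrow> I \<noteq> {0} \<Longrightarrow>
    \<exists>Ps. nonzero_prime_ideals Ps \<and> prod_ideals_subset Ps I"
proof (induction I rule: wf_induct_rule[OF noetherian_wf_ideal_psupset[OF noeth]])
  case (1 I)
  consider "I = UNIV" | "prime_ideal I" | a b where "a * b \<in> I" "a \<notin> I" "b \<notin> I"
    using 1(2) unfolding prime_ideal_def by blast
  then show ?case
  proof cases
    case 1
    then show ?thesis
      unfolding nonzero_prime_ideals_def prod_ideals_subset_def by (intro exI[of _ "[]"]) simp
  next
    case 2
    then show ?thesis
      using "1.prems"(2) unfolding nonzero_prime_ideals_def prod_ideals_subset_def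
      by (intro exI[of _ "[I]"]) (auto simp: list_all2_Cons2)
  next
    case (3 a b)
    have IH: "\<exists>Ps. nonzero_prime_ideals Ps \<and> prod_ideals_subset Ps (ideal_adjoin I x)"
      if "x \<notin> I" for x
    proof (rule "1.IH")
      show "is_ideal (ideal_adjoin I x)" using is_ideal_ideal_adjoin[OF "1.prems"(1)] .
      show "(ideal_adjoin I x, I) \<in> {(J, I). is_ideal I \<and> is_ideal J \<and> I \<subset> J}"
        using "1.prems"(1) is_ideal_ideal_adjoin[OF "1.prems"(1)] subset_ideal_adjoin[OF "1.prems"(1)]
          mem_ideal_adjoin[OF "1.prems"(1), of x] that by blast
      show "ideal_adjoin I x \<noteq> {0}"
        using "1.prems" subset_ideal_adjoin[OF "1.prems"(1), of x] is_ideal_0 by blast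
    qed
    obtain Ps Qs where "nonzero_prime_ideals Ps" "prod_ideals_subset Ps (ideal_adjoin I a)"
      "nonzero_prime_ideals Qs" "prod_ideals_subset Qs (ideal_adjoin I b)"
      using IH[OF 3(2)] IH[OF 3(3)] by blast
    then show ?thesis
      using prod_ideals_subset_append[OF "1.prems"(1) 3(1)] unfolding nonzero_prime_ideals_def
      by (intro exI[of _ "Ps @ Qs"]) auto
  qed
qed

lemma prime_ideal_prod_ideals_subset:
  assumes P: "prime_ideal P"
  shows "prod_ideals_subset Ps P \<Longrightarrow> \<exists>Ps1 Q Ps2. Ps = Ps1 @ Q # Ps2 \<and> Q \<subseteq> P"
proof (induction Ps)
  case Nil
  then show ?case using prime_ideal_one[OF P] unfolding prod_ideals_subset_def by simp
next
  case (Cons Q Qs)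
  show ?case
  proof (cases "Q \<subseteq> P")
    case True
    then show ?thesis by (intro exI[of _ "[]"]) auto
  next
    case False
    then obtain x where x: "x \<in> Q" "x \<notin> P" by blast
    have "prod_ideals_subset Qs P"
      unfolding prod_ideals_subset_def
    proof (intro allI impI)
      fix xs assume "list_all2 (\<in>) xs Qs"
      then have "x * prod_list xs \<in> P"
        using Cons.prems x(1) unfolding prod_ideals_subset_def
      by (metis list.rel_intros(2) prod_list.Cons)
      then show "prod_list xs \<in> P" using prime_idealD[OF P] x(2) by blast
    qed
    then obtain Ps1 Q' Ps2 where "Qs = Ps1 @ Q' # Ps2" "Q' \<subseteq> P" using Cons.IH by blast
    then show ?thesis by (intro exI[of _ "Q # Ps1"]) auto
  qed
qed

lemma dedekind_domainD:
  assumes "dedekind_domain TYPE('a::comm_ring_1)"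
  shows "integral_domain TYPE('a)" "noetherian_ring TYPE('a)" "integrally_closed TYPE('a)"
    "\<And>P :: 'a set. prime_ideal P \<Longrightarrow> P \<noteq> {0} \<Longrightarrow> maximal_ideal P"
  using assms unfolding dedekind_domain_def by blast+

lemma integral_domain_mult_right_cancel:
  assumes "integral_domain TYPE('a::comm_ring_1)" "(g::'a) \<noteq> 0" "x * g = y * g"
  shows "x = y"
proof -
  have "(x - y) * g = 0" using assms(3) by (simp add: algebra_simps)
  then have "x - y = 0" using assms(1,2) unfolding integral_domain_def by blast
  then show ?thesis by simp
qed

lemma maximal_idealD: "maximal_ideal Q \<Longrightarrow> is_ideal J \<Longrightarrow> Q \<subseteq> J \<Longrightarrow> J = Q \<or> J = UNIV"
  unfolding maximal_ideal_def by metis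

lemma is_ideal_multiples: "is_ideal {x. a dvd x}"
  unfolding is_ideal_def by simp

text \<open>For \<open>J \<noteq> R\<close> in a Dedekind domain, \<open>J\<^sup>-\<^sup>1 \<supset> R\<close>: with \<open>P\<^sub>1 \<cdots> P\<^sub>n \<subseteq> (a)\<close> of minimal length
  and \<open>J \<subseteq> P\<close>, some \<open>P\<^sub>i\<close> equals the maximal ideal \<open>P\<close>, and a product \<open>b \<notin> (a)\<close> of elements of
  the other factors satisfies \<open>b J \<subseteq> (a)\<close>.\<close>

lemma dedekind_exists_fraction_not_integral:
  assumes dd: "dedekind_domain TYPE('a::comm_ring_1)"
    and J: "is_ideal J" "J \<noteq> UNIV" and a: "(a::'a) \<in> J" "a \<noteq> 0"
  shows "\<exists>b. \<not> a dvd b \<and> (\<forall>w\<in>J. a dvd b * w)"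
proof -
  have "1 ^ n \<notin> J" for n using is_ideal_eq_UNIV[OF J(1)] J(2) by auto
  from exists_prime_ideal_disjoint_powers[OF J(1) this]
  obtain P where P: "prime_ideal P" "J \<subseteq> P" by blast
  let ?A = "{x. a dvd x}"
  let ?G = "\<lambda>n. \<exists>Ps. length Ps = n \<and> nonzero_prime_ideals Ps \<and> prod_ideals_subset Ps ?A"
  have "a \<in> ?A" by simp
  then have "?A \<noteq> {0}" using a(2) by (metis singletonD)
  from exists_prime_ideals_prod_subset[OF dedekind_domainD(2)[OF dd] is_ideal_multiples this]
  obtain Ps0 where "nonzero_prime_ideals Ps0" "prod_ideals_subset Ps0 ?A" by blast
  then have "\<exists>n. ?G n" by blast
  then obtain n where "?G n" and shortest: "\<And>m. m < n \<Longrightarrow> \<not> ?G m"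
    using exists_least_iff[of ?G] by blast
  then obtain Ps where Ps: "length Ps = n" "nonzero_prime_ideals Ps" "prod_ideals_subset Ps ?A"
    by blast
  have "?A \<subseteq> P"
  proof
    fix x assume "x \<in> ?A"
    then obtain r where "x = a * r" by (auto elim: dvdE)
    then show "x \<in> P" using P(2) is_ideal_mult_right[OF J(1) a(1), of r] by blast
  qed
  then have "prod_ideals_subset Ps P" using Ps(3) unfolding prod_ideals_subset_def by blast
  then obtain Ps1 Q Ps2 where dec: "Ps = Ps1 @ Q # Ps2" "Q \<subseteq> P"
    using prime_ideal_prod_ideals_subset[OF P(1)] by blast
  have "maximal_ideal Q"
    using dedekind_domainD(4)[OF dd] Ps(2) dec(1) unfolding nonzero_prime_ideals_def by simp
  from maximal_idealD[OF this prime_ideal_is_ideal[OF P(1)] dec(2)]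
  have PQ: "P = Q" using P(1) unfolding prime_ideal_def by (elim disjE) simp_all
  have "nonzero_prime_ideals (Ps1 @ Ps2)"
    using Ps(2) dec(1) unfolding nonzero_prime_ideals_def by simp
  moreover have "length (Ps1 @ Ps2) < n" using Ps(1) dec(1) by simp
  ultimately have "\<not> prod_ideals_subset (Ps1 @ Ps2) ?A" using shortest by blast
  then obtain us vs
    where uv: "list_all2 (\<in>) us Ps1" "list_all2 (\<in>) vs Ps2" "\<not> a dvd prod_list us * prod_list vs"
    unfolding prod_ideals_subset_def list_all2_append2 by auto
  have "a dvd prod_list us * prod_list vs * w" if "w \<in> J" for w
  proof -
    have "w \<in> Q" using that P(2) PQ by blast
    then have "list_all2 (\<in>) (us @ w # vs) Ps" using uv dec(1) by (simp add: list_all2_appendI)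
    then have "a dvd prod_list (us @ w # vs)" using Ps(3) unfolding prod_ideals_subset_def by blast
    then show ?thesis by (simp add: mult_ac)
  qed
  then show ?thesis using uv(3) by blast
qed

lemma noetherian_sequence_dependent:
  fixes h :: "nat \<Rightarrow> 'a::comm_ring_1"
  assumes noeth: "noetherian_ring TYPE('a)"
  shows "\<exists>N r. h N = (\<Sum>i<N. r i * h i)"
proof -
  define I where "I n = {\<Sum>i<n. c i * h i | c. True}" for n
  have ideal: "is_ideal (I n)" for n
    unfolding is_ideal_def I_def
  proof (intro conjI ballI allI)
    show "0 \<in> {\<Sum>i<n. c i * h i | c. True}" by (intro CollectI exI[of _ "\<lambda>_. 0"]) simp
  next
    fix x y assume "x \<in> {\<Sum>i<n. c i * h i | c. True}" "y \<in> {\<Sum>i<n. c i * h i | c. True}"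
    then obtain c d where "x = (\<Sum>i<n. c i * h i)" "y = (\<Sum>i<n. d i * h i)" by blast
    then have "x + y = (\<Sum>i<n. (c i + d i) * h i)" by (simp add: distrib_right sum.distrib)
    then show "x + y \<in> {\<Sum>i<n. c i * h i | c. True}"
      by (intro CollectI exI[of _ "\<lambda>i. c i + d i"]) simp
  next
    fix r x assume "x \<in> {\<Sum>i<n. c i * h i | c. True}"
    then obtain c where "x = (\<Sum>i<n. c i * h i)" by blast
    then have "r * x = (\<Sum>i<n. (r * c i) * h i)" by (simp add: sum_distrib_left mult.assoc)
    then show "r * x \<in> {\<Sum>i<n. c i * h i | c. True}"
      by (intro CollectI exI[of _ "\<lambda>i. r * c i"]) simp
  qed
  have "I n \<subseteq> I m" if "n \<le> m" for n m
  proof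
    fix x assume "x \<in> I n"
    then obtain c where x: "x = (\<Sum>i<n. c i * h i)" unfolding I_def by blast
    have "(\<Sum>i<m. (if i < n then c i else 0) * h i) = x"
      unfolding x using that by (intro sum.mono_neutral_cong_right) auto
    then show "x \<in> I m"
      unfolding I_def by (intro CollectI exI[of _ "\<lambda>i. if i < n then c i else 0"]) simp
  qed
  then have "mono I" by (rule monoI)
  then obtain N where N: "\<Union>(range I) \<subseteq> I N"
    using noetherian_ascending_chain[of I, OF noeth ideal] by blast
  have "(\<Sum>i<Suc N. (if i = N then 1 else 0) * h i) = h N"
    by (simp add: if_distrib[of "\<lambda>r. r * _"] cong: if_cong)
  then have "h N \<in> I (Suc N)"
    unfolding I_def by (intro CollectI exI[of _ "\<lambda>i. if i = N then 1 else 0"]) simp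
  with N have "h N \<in> I N" by blast
  then show ?thesis unfolding I_def by blast
qed

text \<open>If \<open>b\<^sup>n g \<in> a\<^sup>n R\<close> for all \<open>n\<close>, the fractions \<open>g (b/a)\<^sup>n\<close> generate a finitely generated ideal,
  so \<open>b/a\<close> is integral over \<open>R\<close> and hence lies in \<open>R\<close>.\<close>

lemma integrally_closed_dvd:
  assumes noeth: "noetherian_ring TYPE('a::comm_ring_1)" and dom: "integral_domain TYPE('a)"
    and ic: "integrally_closed TYPE('a)" and "(g::'a) \<noteq> 0" "a \<noteq> 0"
    and h: "\<And>n. b ^ n * g = a ^ n * h n"
  shows "a dvd b"
proof -
  obtain N r where r: "h N = (\<Sum>i<N. r i * h i)"
    using noetherian_sequence_dependent[OF noeth] by blast
  have "b ^ N * g = (\<Sum>i<N. r i * a ^ (N - i) * (a ^ i * h i))"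
    unfolding h r by (simp add: sum_distrib_left mult_ac power_add[symmetric])
  also have "\<dots> = (\<Sum>i<N. r i * a ^ (N - i) * b ^ i) * g"
    unfolding h[symmetric] by (simp add: sum_distrib_left sum_distrib_right mult_ac)
  finally have "b ^ N = (\<Sum>i<N. r i * a ^ (N - i) * b ^ i)"
    by (rule integral_domain_mult_right_cancel[OF dom \<open>g \<noteq> 0\<close>])
  then have "b ^ N + (\<Sum>i<N. (- r i) * b ^ i * a ^ (N - i)) = 0"
    by (simp add: sum_negf mult_ac)
  with ic \<open>a \<noteq> 0\<close> show ?thesis
    unfolding integrally_closed_def
    by (elim allE[of _ b] allE[of _ a] allE[of _ N] allE[of _ "\<lambda>i. - r i"]) simp
qed

text \<open>For the ideal \<open>I = (s\<^sub>0, \<dots>, s\<^sub>k\<^sub>-\<^sub>1)\<close> and \<open>0 \<noteq> g \<in> I\<close>: \<open>colon g s k = gI\<^sup>-\<^sup>1 = (gR : I)\<close>, and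
  \<open>colon_product g s k = I I\<^sup>-\<^sup>1\<close>; \<open>I\<close> is invertible iff \<open>1 \<in> colon_product g s k\<close>.\<close>

definition colon :: "'a::comm_ring_1 \<Rightarrow> (nat \<Rightarrow> 'a) \<Rightarrow> nat \<Rightarrow> 'a set" where
  "colon g s k = {y. \<forall>i<k. g dvd y * s i}"

definition colon_product :: "'a::comm_ring_1 \<Rightarrow> (nat \<Rightarrow> 'a) \<Rightarrow> nat \<Rightarrow> 'a set" where
  "colon_product g s k = {w. \<exists>p. (\<forall>i<k. p i \<in> colon g s k) \<and> g * w = (\<Sum>i<k. p i * s i)}"

lemma colon_productI:
  "(\<And>i. i < k \<Longrightarrow> p i \<in> colon g s k) \<Longrightarrow> g * w = (\<Sum>i<k. p i * s i) \<Longrightarrow> w \<in> colon_product g s k"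
  unfolding colon_product_def by blast

lemma sum_delta_mult:
  fixes s :: "nat \<Rightarrow> 'a::comm_ring_1"
  assumes "i < k"
  shows "(\<Sum>j<k. (if j = i then y else 0) * s j) = y * s i"
proof -
  have "(\<Sum>j<k. (if j = i then y else 0) * s j) = (\<Sum>j\<in>{i}. (if j = i then y else 0) * s j)"
    using assms by (intro sum.mono_neutral_right) auto
  then show ?thesis by simp
qed

lemma colon_product_single:
  assumes "i < k" "y \<in> colon g s k" "y * s i = g * w"
  shows "w \<in> colon_product g s k"
proof (rule colon_productI)
  show "(if j = i then y else 0) \<in> colon g s k" for j
    using assms(2) unfolding colon_def by simp
  show "g * w = (\<Sum>j<k. (if j = i then y else 0) * s j)"
    by (simp add: sum_delta_mult[OF assms(1)] assms(3))
qed

lemma is_ideal_colon_product: "is_ideal (colon_product g s k)"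
  unfolding is_ideal_def
proof (intro conjI ballI allI)
  show "0 \<in> colon_product g s k"
    by (rule colon_productI[of k "\<lambda>_. 0"]) (simp_all add: colon_def)
next
  fix x y assume "x \<in> colon_product g s k" "y \<in> colon_product g s k"
  then obtain p q where "\<forall>i<k. p i \<in> colon g s k" "g * x = (\<Sum>i<k. p i * s i)"
    "\<forall>i<k. q i \<in> colon g s k" "g * y = (\<Sum>i<k. q i * s i)"
    unfolding colon_product_def by blast
  then show "x + y \<in> colon_product g s k"
    by (intro colon_productI[of k "\<lambda>i. p i + q i"])
      (auto simp: colon_def distrib_left distrib_right sum.distrib)
next
  fix r x assume "x \<in> colon_product g s k"
  then obtain p where "\<forall>i<k. p i \<in> colon g s k" "g * x = (\<Sum>i<k. p i * s i)"
    unfolding colon_product_def by blast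
  moreover have "g * (r * x) = (\<Sum>i<k. (r * p i) * s i)"
    using calculation(2) by (simp add: sum_distrib_left mult.assoc mult.left_commute[of g r])
  ultimately show "r * x \<in> colon_product g s k"
    by (intro colon_productI[of k "\<lambda>i. r * p i"]) (auto simp: colon_def mult.assoc)
qed

text \<open>In fractions: if \<open>(b/a) I I\<^sup>-\<^sup>1 \<subseteq> R\<close>, then \<open>(b/a) I\<^sup>-\<^sup>1 \<subseteq> I\<^sup>-\<^sup>1\<close>.\<close>

lemma colon_mult_fraction:
  assumes dom: "integral_domain TYPE('a::comm_ring_1)" and "(a::'a) \<noteq> 0"
    and g: "i0 < k" "s i0 = g"
    and ab: "\<And>w. w \<in> colon_product g s k \<Longrightarrow> a dvd b * w" and y: "y \<in> colon g s k"
  shows "\<exists>y'\<in>colon g s k. b * y = a * y'"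
proof -
  have "y \<in> colon_product g s k"
    using colon_product_single[OF g(1) y] g(2) by (simp add: mult.commute)
  then obtain y' where y': "b * y = a * y'" using ab by (auto elim: dvdE)
  have "g dvd y' * s i" if i: "i < k" for i
  proof -
    obtain w where w: "y * s i = g * w" using y i unfolding colon_def by (auto elim: dvdE)
    then have "w \<in> colon_product g s k" by (rule colon_product_single[OF i y])
    then obtain v where v: "b * w = a * v" using ab by (auto elim: dvdE)
    have "(y' * s i) * a = (a * y') * s i" by (simp add: mult_ac)
    also have "\<dots> = b * (y * s i)" unfolding y'[symmetric] by (simp add: mult_ac)
    also have "\<dots> = g * (b * w)" unfolding w by (simp add: mult_ac)
    also have "\<dots> = (g * v) * a" unfolding v by (simp add: mult_ac)
    finally have "y' * s i = g * v" by (rule integral_domain_mult_right_cancel[OF dom \<open>a \<noteq> 0\<close>])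
    then show ?thesis by simp
  qed
  then show ?thesis using y' unfolding colon_def by blast
qed

text \<open>Otherwise some \<open>b/a \<notin> R\<close> satisfies \<open>(b/a) I I\<^sup>-\<^sup>1 \<subseteq> R\<close>; then \<open>g (b/a)\<^sup>n \<in> I\<^sup>-\<^sup>1 g \<subseteq> R\<close> for
  all \<open>n\<close>, so \<open>b/a\<close> is integral over \<open>R\<close>.\<close>

lemma dedekind_ideal_invertible:
  fixes s :: "nat \<Rightarrow> 'a::comm_ring_1"
  assumes dd: "dedekind_domain TYPE('a)" and g: "i0 < k" "s i0 = g" "g \<noteq> 0"
  shows "1 \<in> colon_product g s k"
proof (rule ccontr)
  assume "1 \<notin> colon_product g s k"
  then have "colon_product g s k \<noteq> UNIV" by (metis UNIV_I)
  moreover have "g \<in> colon_product g s k"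
    using colon_product_single[OF g(1), of g g] g(2) unfolding colon_def by simp
  ultimately obtain b where b: "\<not> g dvd b" "\<And>w. w \<in> colon_product g s k \<Longrightarrow> g dvd b * w"
    using dedekind_exists_fraction_not_integral[OF dd is_ideal_colon_product] g(3) by blast
  have "\<exists>h\<in>colon g s k. b ^ n * g = g ^ n * h" for n
  proof (induction n)
    case 0
    show ?case unfolding colon_def by simp
  next
    case (Suc n)
    then obtain h where h: "h \<in> colon g s k" "b ^ n * g = g ^ n * h" by blast
    obtain h' where "h' \<in> colon g s k" "b * h = g * h'"
      using colon_mult_fraction[OF dedekind_domainD(1)[OF dd] g(3) g(1,2) b(2) h(1)] by blast
    moreover have "b ^ Suc n * g = g ^ n * (b * h)" using h(2) by (simp add: mult_ac)
    ultimately show ?case by (metis mult.assoc power_Suc2)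
  qed
  then have "\<forall>n. \<exists>h. b ^ n * g = g ^ n * h" by blast
  then obtain h where "\<forall>n. b ^ n * g = g ^ n * h n" by (rule choice_iff[THEN iffD1, THEN exE])
  then have "g dvd b"
    using integrally_closed_dvd[OF dedekind_domainD(2,1,3)[OF dd] g(3) g(3)] by simp
  then show False using b(1) by simp
qed

text \<open>In a Dedekind domain the row sums admit coefficients \<open>c\<^sub>i\<^sub>j = p\<^sub>i s\<^sub>j / g\<close>, where
  \<open>\<Sum>\<^sub>i p\<^sub>i s\<^sub>i = g\<close> with \<open>p\<^sub>i \<in> gI\<^sup>-\<^sup>1\<close> expresses \<open>I I\<^sup>-\<^sup>1 = R\<close>.\<close>

lemma dedekind_row_sum_coefficients:
  fixes s :: "nat \<Rightarrow> 'a::comm_ring_1"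
  assumes dd: "dedekind_domain TYPE('a)" and "i0 < k" "s i0 \<noteq> 0"
  shows "\<exists>c. (\<Sum>i<k. c i i) = 1 \<and> (\<forall>i<k. \<forall>j<k. c i i * s j = c i j * s i)"
proof -
  define g where "g = s i0"
  have dom: "integral_domain TYPE('a)" by (rule dedekind_domainD(1)[OF dd])
  have "g \<noteq> 0" using assms(3) unfolding g_def .
  from dedekind_ideal_invertible[where s = s, OF dd assms(2) g_def[symmetric] this]
  obtain p where p: "\<And>i. i < k \<Longrightarrow> p i \<in> colon g s k" "g * 1 = (\<Sum>i<k. p i * s i)"
    unfolding colon_product_def by blast
  have "\<forall>i j. \<exists>c. i < k \<and> j < k \<longrightarrow> p i * s j = g * c"
    using p(1) unfolding colon_def dvd_def by blast
  then obtain c where c: "\<And>i j. i < k \<Longrightarrow> j < k \<Longrightarrow> p i * s j = g * c i j" by metis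
  have "(\<Sum>i<k. c i i) * g = (\<Sum>i<k. g * c i i)"
    by (simp add: sum_distrib_left mult.commute)
  also have "\<dots> = 1 * g" using c p(2) by simp
  finally have "(\<Sum>i<k. c i i) * g = 1 * g" .
  then have "(\<Sum>i<k. c i i) = 1"
    by (rule integral_domain_mult_right_cancel[OF dom \<open>g \<noteq> 0\<close>])
  moreover have "c i i * s j = c i j * s i" if "i < k" "j < k" for i j
  proof -
    have "(c i i * s j) * g = (p i * s i) * s j" using c[of i i] that by (simp add: mult_ac)
    also have "\<dots> = (p i * s j) * s i" by (simp add: mult_ac)
    also have "\<dots> = (c i j * s i) * g" using c[OF that] by (simp add: mult_ac)
    finally have "(c i i * s j) * g = (c i j * s i) * g" .
    then show ?thesis by (rule integral_domain_mult_right_cancel[OF dom \<open>g \<noteq> 0\<close>])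
  qed
  ultimately show ?thesis by (intro exI[of _ c]) blast
qed

context module
begin

lemma row_sum_condition_dedekind:
  assumes dd: "dedekind_domain TYPE('a)" and N: "row_sum_condition scale s b k"
  shows "\<exists>x. \<forall>i<k. scale (s i) x = b i"
proof (cases "\<exists>i0<k. s i0 \<noteq> 0")
  case True
  then obtain i0 where "i0 < k" "s i0 \<noteq> 0" by blast
  from dedekind_row_sum_coefficients[where s = s, OF dd this]
  obtain c where c: "(\<Sum>i<k. c i i) = 1" "\<forall>i<k. \<forall>j<k. c i i * s j = c i j * s i" by blast
  show ?thesis by (rule row_sum_condition_invertible[where c = c, OF N c(1)]) (use c(2) in blast)
next
  case False
  then show ?thesis using row_sum_condition_single[OF N] by auto
qed

end

theorem theorem5p10:
  fixes scale :: "'a::comm_ring_1 \<Rightarrow> 'b::ab_group_add \<Rightarrow> 'b"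
    and A :: "nat \<Rightarrow> nat \<Rightarrow> 'a" and k l :: nat and b :: "nat \<Rightarrow> 'b"
  assumes "module scale"
    and "(integral_domain TYPE('a) \<and> torsion_free scale)
         \<or> dedekind_domain TYPE('a)
         \<or> (reduced_ring TYPE('a) \<and> finite {P :: 'a set. minimal_prime_ideal P} \<and>
            (\<exists>f :: 'b \<Rightarrow> 'a. bij f \<and> module_hom scale (*) f))"
    and "\<exists>i<k. b i \<noteq> 0"
  shows "partition_regular scale A k l b \<longleftrightarrow> (\<exists>m. solves scale A k l b (\<lambda>_. m))"
proof
  assume "partition_regular scale A k l b"
  define s where "s i = (\<Sum>j<l. A i j)" for i
  have N: "row_sum_condition scale s b k"
    unfolding s_def by (rule module.partition_regular_imp_row_sum_condition[OF assms(1)]) fact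
  from assms(2) obtain m where "\<forall>i<k. scale (s i) m = b i"
    using module.row_sum_condition_torsion_free[OF assms(1) _ N]
      module.row_sum_condition_dedekind[OF assms(1) _ N]
      row_sum_condition_free_rank_one[OF _ _ _ _ N] by blast
  then show "\<exists>m. solves scale A k l b (\<lambda>_. m)"
    unfolding solves_def s_def by (auto simp: module.scale_sum_left[OF assms(1)])
next
  assume "\<exists>m. solves scale A k l b (\<lambda>_. m)"
  then show "partition_regular scale A k l b"
    using module.constant_solution_imp_partition_regular[OF assms(1) _ assms(3)] by blast
qed

end
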